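(* Let $K$ be a field, $R=\bigoplus_{m\ge0}R_m$ an $\mathbb N$-graded $K$-algebra, and let $A=\sigma(R)\langle x_1,x_2\rangle$ be a connected graded skew PBW extension of $R$. Then $A$ is a connected graded double Ore extension of $R$ (with generating variables $x_1,x_2$).
   Context: All algebras are over a field $K$; a graded algebra $B=\bigoplus_{p\ge0}B_p$ is connected if $B_0=K$. Skew PBW extension: a ring $A$ is a skew PBW extension of $R$ in $x_1,\dots,x_n$, written $A=\sigma(R)\langle x_1,\dots,x_n\rangle$, if (i) $R\subseteq A$; (ii) $A$ is a free left $R$-module with basis the standard monomials $x^\alpha=x_1^{\alpha_1}\cdots x_n^{\alpha_n}$, $\alpha\in\mathbb N^n$; (iii) for each $i$ and $r\in R\setminus\{0\}$ there is $c_{i,r}\in R\setminus\{0\}$ with $x_ir-c_{i,r}x_i\in R$; (iv) for all $i,j$ there is $c_{i,j}\in R\setminus\{0\}$ with $x_jx_i-c_{i,j}x_ix_j\in R+Rx_1+\cdots+Rx_n$. Then for each $i$ there are an injective ring endomorphism $\sigma_i$ of $R$ and a $\sigma_i$-derivation $\delta_i$ with $x_ir=\sigma_i(r)x_i+\delta_i(r)$. $A$ is bijective if every $\sigma_i$ is bijective and every $c_{i,j}$ ($i<j$) is invertible. A graded skew PBW extension is a bijective skew PBW extension of an $\mathbb N$-graded algebra $R$ such that each $\sigma_i$ is a graded homomorphism, each $\delta_i$ satisfies $\delta_i(R_m)\subseteq R_{m+1}$, and $x_jx_i-c_{i,j}x_ix_j\in R_2+R_1x_1+\cdots+R_1x_n$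 with $c_{i,j}\in R_0$; it is graded by $A_p=\mathrm{span}_K\{r_tx^\alpha: t+|\alpha|=p,\ r_t\in R_t\}$. Double Ore extensions: a $K$-algebra $B\supseteq R$ is a right double Ore extension of $R$ if (1) $B$ is generated by $R$ and $x_1,x_2$; (2) $x_2x_1=p_{12}x_1x_2+p_{11}x_1^2+\tau_1x_1+\tau_2x_2+\tau_0$ with $p_{12},p_{11}\in K$, $\tau_i\in R$; (3) $B$ is a free left $R$-module with basis $\{x_1^ax_2^b\}_{a,b\ge0}$; (4) $x_1R+x_2R\subseteq Rx_1+Rx_2+R$. It is a left double Ore extension if (1) holds, $x_1x_2=p'_{12}x_2x_1+p'_{11}x_1^2+x_1\tau'_1+x_2\tau'_2+\tau'_0$ with $p'_{12},p'_{11}\in K$, $\tau'_i\in R$, $B$ is a free right $R$-module with basis $\{x_1^ax_2^b\}$, and $x_1R+x_2R\subseteq Rx_1+Rx_2+R$. It is a double Ore extension if it is both a left and a right double Ore extension with the same generators $x_1,x_2$. It is graded if all its relations are homogeneous with $\deg x_1=\deg x_2=1$ (with $R$ graded). *)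

theory Defs
  imports "HOL-Algebra.Algebra"
begin

text \<open>All objects live inside one ambient ring A (HOL-Algebra record).
  K is a central subfield of A (so A is a K-algebra), R is a subring of A containing K.\<close>

definition K_algebra_setup :: "'a ring \<Rightarrow> 'a set \<Rightarrow> 'a set \<Rightarrow> bool" where
  "K_algebra_setup A K R \<longleftrightarrow> ring A \<and> subfield K A \<and> subring R A \<and> K \<subseteq> R \<and>
     (\<forall>k\<in>K. \<forall>a\<in>carrier A. k \<otimes>\<^bsub>A\<^esub> a = a \<otimes>\<^bsub>A\<^esub> k)"

definition graded_alg :: "'a ring \<Rightarrow> 'a set \<Rightarrow> 'a set \<Rightarrow> (nat \<Rightarrow> 'a set) \<Rightarrow> bool" where
  "graded_alg A K R Rg \<longleftrightarrow>
     (\<forall>m. Rg m \<subseteq> R \<and> \<zero>\<^bsub>A\<^esub> \<in> Rg m \<and>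
          (\<forall>a\<in>Rg m. \<forall>b\<in>Rg m. a \<oplus>\<^bsub>A\<^esub> b \<in> Rg m) \<and>
          (\<forall>k\<in>K. \<forall>a\<in>Rg m. k \<otimes>\<^bsub>A\<^esub> a \<in> Rg m)) \<and>
     (\<forall>m n. \<forall>a\<in>Rg m. \<forall>b\<in>Rg n. a \<otimes>\<^bsub>A\<^esub> b \<in> Rg (m + n)) \<and>
     \<one>\<^bsub>A\<^esub> \<in> Rg 0 \<and>
     (\<forall>r\<in>R. \<exists>N f. (\<forall>m. f m \<in> Rg m) \<and> r = finsum A f {..<N}) \<and>
     (\<forall>N f. (\<forall>m. f m \<in> Rg m) \<and> finsum A f {..<N} = \<zero>\<^bsub>A\<^esub> \<longrightarrow> (\<forall>m<N. f m = \<zero>\<^bsub>A\<^esub>))"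

definition mon :: "'a ring \<Rightarrow> 'a \<Rightarrow> 'a \<Rightarrow> nat \<times> nat \<Rightarrow> 'a" where
  "mon A x1 x2 p = (x1 [^]\<^bsub>A\<^esub> fst p) \<otimes>\<^bsub>A\<^esub> (x2 [^]\<^bsub>A\<^esub> snd p)"

definition left_free_basis :: "'a ring \<Rightarrow> 'a set \<Rightarrow> (nat \<times> nat \<Rightarrow> 'a) \<Rightarrow> bool" where
  "left_free_basis A R B \<longleftrightarrow>
     (\<forall>a\<in>carrier A. \<exists>N c. (\<forall>p. c p \<in> R) \<and>
         a = finsum A (\<lambda>p. c p \<otimes>\<^bsub>A\<^esub> B p) ({..<N} \<times> {..<N})) \<and>
     (\<forall>N c. (\<forall>p. c p \<in> R) \<and> finsum A (\<lambda>p. c p \<otimes>\<^bsub>A\<^esub> B p) ({..<N} \<times> {..<N}) = \<zero>\<^bsub>A\<^esub>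
         \<longrightarrow> (\<forall>p\<in>{..<N} \<times> {..<N}. c p = \<zero>\<^bsub>A\<^esub>))"

definition right_free_basis :: "'a ring \<Rightarrow> 'a set \<Rightarrow> (nat \<times> nat \<Rightarrow> 'a) \<Rightarrow> bool" where
  "right_free_basis A R B \<longleftrightarrow>
     (\<forall>a\<in>carrier A. \<exists>N c. (\<forall>p. c p \<in> R) \<and>
         a = finsum A (\<lambda>p. B p \<otimes>\<^bsub>A\<^esub> c p) ({..<N} \<times> {..<N})) \<and>
     (\<forall>N c. (\<forall>p. c p \<in> R) \<and> finsum A (\<lambda>p. B p \<otimes>\<^bsub>A\<^esub> c p) ({..<N} \<times> {..<N}) = \<zero>\<^bsub>A\<^esub>
         \<longrightarrow> (\<forall>p\<in>{..<N} \<times> {..<N}. c p = \<zero>\<^bsub>A\<^esub>))"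

definition lcomb :: "'a ring \<Rightarrow> 'a set \<Rightarrow> 'a set \<Rightarrow> 'a set \<Rightarrow> 'a \<Rightarrow> 'a \<Rightarrow> 'a set" where
  "lcomb A S0 S1 S2 x1 x2 =
     {r0 \<oplus>\<^bsub>A\<^esub> (r1 \<otimes>\<^bsub>A\<^esub> x1) \<oplus>\<^bsub>A\<^esub> (r2 \<otimes>\<^bsub>A\<^esub> x2) | r0 r1 r2. r0 \<in> S0 \<and> r1 \<in> S1 \<and> r2 \<in> S2}"

definition skew_PBW :: "'a ring \<Rightarrow> 'a set \<Rightarrow> 'a \<Rightarrow> 'a \<Rightarrow> bool" where
  "skew_PBW A R x1 x2 \<longleftrightarrow>
     R \<subseteq> carrier A \<and> x1 \<in> carrier A \<and> x2 \<in> carrier A \<and>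
     left_free_basis A R (mon A x1 x2) \<and>
     (\<forall>xi\<in>{x1, x2}. \<forall>r\<in>R - {\<zero>\<^bsub>A\<^esub>}. \<exists>c\<in>R - {\<zero>\<^bsub>A\<^esub>}.
         xi \<otimes>\<^bsub>A\<^esub> r \<ominus>\<^bsub>A\<^esub> c \<otimes>\<^bsub>A\<^esub> xi \<in> R) \<and>
     (\<forall>xi\<in>{x1, x2}. \<forall>xj\<in>{x1, x2}. \<exists>c\<in>R - {\<zero>\<^bsub>A\<^esub>}.
         xj \<otimes>\<^bsub>A\<^esub> xi \<ominus>\<^bsub>A\<^esub> c \<otimes>\<^bsub>A\<^esub> xi \<otimes>\<^bsub>A\<^esub> xj \<in> lcomb A R R R x1 x2)"

text \<open>Graded skew PBW extension: bijective skew PBW extension with graded sigma_i,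
  degree-raising delta_i and homogeneous commutation relations with c_ij in R_0.
  (c_12 invertible in R is the bijectivity condition for i<j.)\<close>
definition graded_skew_PBW ::
    "'a ring \<Rightarrow> 'a set \<Rightarrow> 'a set \<Rightarrow> (nat \<Rightarrow> 'a set) \<Rightarrow> 'a \<Rightarrow> 'a \<Rightarrow> bool" where
  "graded_skew_PBW A K R Rg x1 x2 \<longleftrightarrow>
     graded_alg A K R Rg \<and> skew_PBW A R x1 x2 \<and>
     (\<forall>xi\<in>{x1, x2}. \<exists>\<sigma> \<delta>.
         (\<forall>r\<in>R. \<sigma> r \<in> R \<and> \<delta> r \<in> R \<and> xi \<otimes>\<^bsub>A\<^esub> r = \<sigma> r \<otimes>\<^bsub>A\<^esub> xi \<oplus>\<^bsub>A\<^esub> \<delta> r) \<and>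
         bij_betw \<sigma> R R \<and>
         (\<forall>m. \<forall>r\<in>Rg m. \<sigma> r \<in> Rg m \<and> \<delta> r \<in> Rg (Suc m))) \<and>
     (\<exists>c\<in>R. (\<exists>d\<in>R. c \<otimes>\<^bsub>A\<^esub> d = \<one>\<^bsub>A\<^esub> \<and> d \<otimes>\<^bsub>A\<^esub> c = \<one>\<^bsub>A\<^esub>) \<and>
         x2 \<otimes>\<^bsub>A\<^esub> x1 \<ominus>\<^bsub>A\<^esub> c \<otimes>\<^bsub>A\<^esub> x1 \<otimes>\<^bsub>A\<^esub> x2 \<in> lcomb A R R R x1 x2) \<and>
     (\<forall>xi\<in>{x1, x2}. \<forall>xj\<in>{x1, x2}. \<exists>c\<in>Rg 0 - {\<zero>\<^bsub>A\<^esub>}.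
         xj \<otimes>\<^bsub>A\<^esub> xi \<ominus>\<^bsub>A\<^esub> c \<otimes>\<^bsub>A\<^esub> xi \<otimes>\<^bsub>A\<^esub> xj \<in> lcomb A (Rg 2) (Rg 1) (Rg 1) x1 x2)"

inductive_set addcl :: "('a, 'b) ring_scheme \<Rightarrow> 'a set \<Rightarrow> 'a set" for A S where
  zero: "\<zero>\<^bsub>A\<^esub> \<in> addcl A S"
| incl: "s \<in> S \<Longrightarrow> s \<in> addcl A S"
| add:  "a \<in> addcl A S \<Longrightarrow> b \<in> addcl A S \<Longrightarrow> a \<oplus>\<^bsub>A\<^esub> b \<in> addcl A S"

definition kspan :: "('a, 'b) ring_scheme \<Rightarrow> 'a set \<Rightarrow> 'a set \<Rightarrow> 'a set" where
  "kspan A K S = addcl A {k \<otimes>\<^bsub>A\<^esub> s | k s. k \<in> K \<and> s \<in> S}"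

definition Agr :: "'a ring \<Rightarrow> 'a set \<Rightarrow> (nat \<Rightarrow> 'a set) \<Rightarrow> 'a \<Rightarrow> 'a \<Rightarrow> nat \<Rightarrow> 'a set" where
  "Agr A K Rg x1 x2 p = kspan A K
     {r \<otimes>\<^bsub>A\<^esub> mon A x1 x2 (a, b) | r t a b. r \<in> Rg t \<and> t + a + b = p}"

definition connected_graded :: "'a ring \<Rightarrow> 'a set \<Rightarrow> (nat \<Rightarrow> 'a set) \<Rightarrow> 'a \<Rightarrow> 'a \<Rightarrow> bool" where
  "connected_graded A K Rg x1 x2 \<longleftrightarrow> Agr A K Rg x1 x2 0 = K"

definition right_double_Ore :: "'a ring \<Rightarrow> 'a set \<Rightarrow> 'a set \<Rightarrow> 'a \<Rightarrow> 'a \<Rightarrow> bool" where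
  "right_double_Ore A K R x1 x2 \<longleftrightarrow>
     R \<subseteq> carrier A \<and> x1 \<in> carrier A \<and> x2 \<in> carrier A \<and>
     generate_ring A (R \<union> {x1, x2}) = carrier A \<and>
     (\<exists>p12\<in>K. \<exists>p11\<in>K. \<exists>\<tau>0\<in>R. \<exists>\<tau>1\<in>R. \<exists>\<tau>2\<in>R.
        x2 \<otimes>\<^bsub>A\<^esub> x1 = p12 \<otimes>\<^bsub>A\<^esub> x1 \<otimes>\<^bsub>A\<^esub> x2 \<oplus>\<^bsub>A\<^esub> p11 \<otimes>\<^bsub>A\<^esub> x1 \<otimes>\<^bsub>A\<^esub> x1
          \<oplus>\<^bsub>A\<^esub> \<tau>1 \<otimes>\<^bsub>A\<^esub> x1 \<oplus>\<^bsub>A\<^esub> \<tau>2 \<otimes>\<^bsub>A\<^esub> x2 \<oplus>\<^bsub>A\<^esub> \<tau>0) \<and>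
     left_free_basis A R (mon A x1 x2) \<and>
     (\<forall>xi\<in>{x1, x2}. \<forall>r\<in>R. xi \<otimes>\<^bsub>A\<^esub> r \<in> lcomb A R R R x1 x2)"

definition left_double_Ore :: "'a ring \<Rightarrow> 'a set \<Rightarrow> 'a set \<Rightarrow> 'a \<Rightarrow> 'a \<Rightarrow> bool" where
  "left_double_Ore A K R x1 x2 \<longleftrightarrow>
     R \<subseteq> carrier A \<and> x1 \<in> carrier A \<and> x2 \<in> carrier A \<and>
     generate_ring A (R \<union> {x1, x2}) = carrier A \<and>
     (\<exists>p12\<in>K. \<exists>p11\<in>K. \<exists>\<tau>0\<in>R. \<exists>\<tau>1\<in>R. \<exists>\<tau>2\<in>R.
        x1 \<otimes>\<^bsub>A\<^esub> x2 = p12 \<otimes>\<^bsub>A\<^esub> x2 \<otimes>\<^bsub>A\<^esub> x1 \<oplus>\<^bsub>A\<^esub> p11 \<otimes>\<^bsub>A\<^esub> x1 \<otimes>\<^bsub>A\<^esub> x1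
          \<oplus>\<^bsub>A\<^esub> x1 \<otimes>\<^bsub>A\<^esub> \<tau>1 \<oplus>\<^bsub>A\<^esub> x2 \<otimes>\<^bsub>A\<^esub> \<tau>2 \<oplus>\<^bsub>A\<^esub> \<tau>0) \<and>
     right_free_basis A R (mon A x1 x2) \<and>
     (\<forall>xi\<in>{x1, x2}. \<forall>r\<in>R. xi \<otimes>\<^bsub>A\<^esub> r \<in> lcomb A R R R x1 x2)"

text \<open>Graded double Ore extension: both, with all relations homogeneous (deg x1 = deg x2 = 1).\<close>
definition graded_double_Ore ::
    "'a ring \<Rightarrow> 'a set \<Rightarrow> 'a set \<Rightarrow> (nat \<Rightarrow> 'a set) \<Rightarrow> 'a \<Rightarrow> 'a \<Rightarrow> bool" where
  "graded_double_Ore A K R Rg x1 x2 \<longleftrightarrow>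
     right_double_Ore A K R x1 x2 \<and> left_double_Ore A K R x1 x2 \<and>
     (\<exists>p12\<in>K. \<exists>p11\<in>K. \<exists>\<tau>0\<in>Rg 2. \<exists>\<tau>1\<in>Rg 1. \<exists>\<tau>2\<in>Rg 1.
        x2 \<otimes>\<^bsub>A\<^esub> x1 = p12 \<otimes>\<^bsub>A\<^esub> x1 \<otimes>\<^bsub>A\<^esub> x2 \<oplus>\<^bsub>A\<^esub> p11 \<otimes>\<^bsub>A\<^esub> x1 \<otimes>\<^bsub>A\<^esub> x1
          \<oplus>\<^bsub>A\<^esub> \<tau>1 \<otimes>\<^bsub>A\<^esub> x1 \<oplus>\<^bsub>A\<^esub> \<tau>2 \<otimes>\<^bsub>A\<^esub> x2 \<oplus>\<^bsub>A\<^esub> \<tau>0) \<and>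
     (\<exists>p12\<in>K. \<exists>p11\<in>K. \<exists>\<tau>0\<in>Rg 2. \<exists>\<tau>1\<in>Rg 1. \<exists>\<tau>2\<in>Rg 1.
        x1 \<otimes>\<^bsub>A\<^esub> x2 = p12 \<otimes>\<^bsub>A\<^esub> x2 \<otimes>\<^bsub>A\<^esub> x1 \<oplus>\<^bsub>A\<^esub> p11 \<otimes>\<^bsub>A\<^esub> x1 \<otimes>\<^bsub>A\<^esub> x1
          \<oplus>\<^bsub>A\<^esub> x1 \<otimes>\<^bsub>A\<^esub> \<tau>1 \<oplus>\<^bsub>A\<^esub> x2 \<otimes>\<^bsub>A\<^esub> \<tau>2 \<oplus>\<^bsub>A\<^esub> \<tau>0) \<and>
     (\<forall>xi\<in>{x1, x2}. \<forall>m. \<forall>r\<in>Rg m. xi \<otimes>\<^bsub>A\<^esub> r \<in> lcomb A (Rg (Suc m)) (Rg m) (Rg m) x1 x2)"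

end

theory Submission
  imports Defs
begin

text \<open>
  Most conditions of a graded double Ore extension can be read off the PBW data: the commutation
  rules \<open>x\<^sub>i r = \<sigma>\<^sub>i(r) x\<^sub>i + \<delta>\<^sub>i(r)\<close> already have the required shape and degrees, the
  constants \<open>c\<^sub>i\<^sub>j \<in> R\<^sub>0\<close> lie in \<open>K\<close> by connectedness, and the left form of the relation
  between \<open>x\<^sub>1 x\<^sub>2\<close> and \<open>x\<^sub>2 x\<^sub>1\<close> follows by rewriting \<open>u x\<^sub>i = x\<^sub>i v - \<delta>\<^sub>i(v)\<close> with
  \<open>\<sigma>\<^sub>i(v) = u\<close>.  Here \<open>v\<close> is again homogeneous because \<open>\<sigma>\<^sub>i\<close> is bijective, additive (the
  coefficients of \<open>1\<close> and \<open>x\<^sub>i\<close> are unique) and preserves degrees, so it cannot mix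
  homogeneous components.

  The real work is to show that the standard monomials are also a basis of \<open>A\<close> as a right
  \<open>R\<close>-module.  Spanning follows by induction on the total degree: \<open>r x\<^sub>1 w = x\<^sub>1 r' w - \<delta>\<^sub>1(r') w\<close>
  for \<open>\<sigma>\<^sub>1(r') = r\<close>, and \<open>x\<^sub>2 x\<^sub>1 w\<close> is rewritten with the relation, whose leading coefficient
  lies in the central subfield \<open>K\<close>.  Independence is a leading term argument:
  \<open>x\<^sup>\<alpha> r = \<sigma>\<^sup>\<alpha>(r) x\<^sup>\<alpha> + (terms of lower total degree)\<close> with \<open>\<sigma>\<^sup>\<alpha>\<close> injective, so the top
  degree part of a vanishing right combination has vanishing left coefficients.
\<close>

lemma addcl_mono:
  assumes "S \<subseteq> T" and "e \<in> addcl A S"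
  shows "e \<in> addcl A T"
  using assms(2) by induction (use assms(1) in \<open>auto intro: addcl.intros\<close>)

context ring
begin

lemma addcl_closed:
  assumes "S \<subseteq> carrier R" and "e \<in> addcl R S"
  shows "e \<in> carrier R"
  using assms(2) by induction (use assms(1) in auto)

lemma addcl_mult_left:
  assumes y: "y \<in> carrier R" and S: "S \<subseteq> carrier R"
    and gens: "\<And>s. s \<in> S \<Longrightarrow> y \<otimes> s \<in> addcl R T"
    and e: "e \<in> addcl R S"
  shows "y \<otimes> e \<in> addcl R T"
  using e
proof (induction rule: addcl.induct)
  case zero
  show ?case using y by (simp add: addcl.zero)
next
  case (incl s)
  then show ?case by (rule gens)
next
  case (add a b)
  have "a \<in> carrier R" "b \<in> carrier R" using add.hyps addcl_closed[OF S] by blast+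
  then have "y \<otimes> (a \<oplus> b) = y \<otimes> a \<oplus> y \<otimes> b" using y by (simp add: r_distr)
  then show ?case using add.IH addcl.add by metis
qed

lemma finsum_in_addcl:
  assumes "finite I" and "S \<subseteq> carrier R" and "\<And>i. i \<in> I \<Longrightarrow> f i \<in> addcl R S"
  shows "finsum R f I \<in> addcl R S"
  using assms(1,3)
proof (induction I rule: finite_induct)
  case empty
  then show ?case by (simp add: addcl.zero)
next
  case (insert i I)
  have "f \<in> I \<rightarrow> carrier R" "f i \<in> carrier R"
    using insert.prems addcl_closed[OF assms(2)] by auto
  then have "finsum R f (insert i I) = f i \<oplus> finsum R f I"
    using insert.hyps by (simp add: finsum_insert)
  then show ?case using insert by (simp add: addcl.add)
qed

lemma eq_add_imp_eq_minus: "b \<in> carrier R \<Longrightarrow> c \<in> carrier R \<Longrightarrow> a = b \<oplus> c \<Longrightarrow> b = a \<oplus> \<ominus> c"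
  by (simp add: a_assoc r_neg)

lemma minus_eq_imp_eq_add: "a \<in> carrier R \<Longrightarrow> b \<in> carrier R \<Longrightarrow> a \<ominus> b = z \<Longrightarrow> a = b \<oplus> z"
  by (metis a_minus_def add.inv_closed add.m_lcomm r_neg r_zero)

end

locale ring_subring = ring A for A :: "'a ring" (structure) +
  fixes R :: "'a set"
  assumes subring_R: "subring R A"
begin

lemma R_carrier [simp]: "r \<in> R \<Longrightarrow> r \<in> carrier A"
  using subringE(1)[OF subring_R] by blast

lemma R_zero: "\<zero> \<in> R" and R_one: "\<one> \<in> R"
  using subringE(2,3)[OF subring_R] by auto

lemma R_add: "a \<in> R \<Longrightarrow> b \<in> R \<Longrightarrow> a \<oplus> b \<in> R"
  and R_mult: "a \<in> R \<Longrightarrow> b \<in> R \<Longrightarrow> a \<otimes> b \<in> R"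
  and R_neg: "a \<in> R \<Longrightarrow> \<ominus> a \<in> R"
  using subringE(5-7)[OF subring_R] by auto

text \<open>Coefficient families are supported in a square \<open>{..<M} \<times> {..<M}\<close>, matching the sums in
  \<^const>\<open>left_free_basis\<close>.\<close>

definition coeffs :: "(nat \<times> nat \<Rightarrow> 'a) \<Rightarrow> nat \<Rightarrow> bool" where
  "coeffs f M \<longleftrightarrow> (\<forall>q. f q \<in> R) \<and> (\<forall>q. q \<notin> {..<M} \<times> {..<M} \<longrightarrow> f q = \<zero>)"

lemma coeffs_in_R: "coeffs f M \<Longrightarrow> f q \<in> R"
  unfolding coeffs_def by blast

lemma coeffs_outside: "coeffs f M \<Longrightarrow> q \<notin> {..<M} \<times> {..<M} \<Longrightarrow> f q = \<zero>"
  unfolding coeffs_def by blast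

lemma coeffs_add:
  assumes "coeffs f M" and "coeffs g N"
  shows "coeffs (\<lambda>q. f q \<oplus> g q) (max M N)"
  unfolding coeffs_def
proof (intro conjI allI impI)
  fix q
  show "f q \<oplus> g q \<in> R" using assms R_add coeffs_in_R by blast
  assume "q \<notin> {..<max M N} \<times> {..<max M N}"
  then have "q \<notin> {..<M} \<times> {..<M}" "q \<notin> {..<N} \<times> {..<N}" by auto
  then show "f q \<oplus> g q = \<zero>" using coeffs_outside[OF assms(1)] coeffs_outside[OF assms(2)] by simp
qed

lemma coeffs_single:
  assumes "c \<in> R" and "fst p < M" and "snd p < M"
  shows "coeffs (\<lambda>q. if q = p then c else \<zero>) M"
  unfolding coeffs_def
proof (intro conjI allI impI)
  fix q
  show "(if q = p then c else \<zero>) \<in> R" using assms R_zero by simp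
  assume "q \<notin> {..<M} \<times> {..<M}"
  moreover have "p \<in> {..<M} \<times> {..<M}" using assms(2,3) by (simp add: mem_Times_iff)
  ultimately have "q \<noteq> p" by blast
  then show "(if q = p then c else \<zero>) = \<zero>" by simp
qed

end

text \<open>\<open>h c q\<close> is the term with coefficient \<open>c\<close> at the basis element indexed by \<open>q\<close>; it is
  instantiated below with the coefficient on the left and on the right of the monomial.\<close>

locale one_sided_comb = ring_subring +
  fixes h :: "'a \<Rightarrow> nat \<times> nat \<Rightarrow> 'a"
  assumes h_closed: "c \<in> R \<Longrightarrow> h c q \<in> carrier A"
    and h_zero: "h \<zero> q = \<zero>"
    and h_add: "c \<in> R \<Longrightarrow> d \<in> R \<Longrightarrow> h (c \<oplus> d) q = h c q \<oplus> h d q"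
begin

definition comb :: "(nat \<times> nat \<Rightarrow> 'a) \<Rightarrow> nat \<Rightarrow> 'a" where
  "comb f M = finsum A (\<lambda>q. h (f q) q) ({..<M} \<times> {..<M})"

definition span :: "(nat \<times> nat \<Rightarrow> bool) \<Rightarrow> 'a set" where
  "span P = addcl A {h c q | c q. c \<in> R \<and> P q}"

lemma h_neg: "c \<in> R \<Longrightarrow> h (\<ominus> c) q = \<ominus> h c q"
proof -
  assume c: "c \<in> R"
  have "h (\<ominus> c) q \<oplus> h c q = h (\<ominus> c \<oplus> c) q"
    using h_add[OF R_neg[OF c] c] by simp
  also have "\<dots> = \<zero>"
    using c by (simp add: l_neg h_zero)
  finally have "h (\<ominus> c) q \<oplus> h c q = \<zero>" .
  then show ?thesis
    using c by (intro minus_equality[symmetric]) (auto intro: h_closed R_neg)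
qed

lemma span_generators_closed: "{h c q | c q. c \<in> R \<and> P q} \<subseteq> carrier A"
  using h_closed by auto

lemma span_closed: "e \<in> span P \<Longrightarrow> e \<in> carrier A"
  unfolding span_def using addcl_closed[OF span_generators_closed] by blast

lemma span_mono: "(\<And>q. P q \<Longrightarrow> Q q) \<Longrightarrow> e \<in> span P \<Longrightarrow> e \<in> span Q"
  unfolding span_def by (erule addcl_mono[rotated]) blast

lemma span_gen: "c \<in> R \<Longrightarrow> P q \<Longrightarrow> h c q \<in> span P"
  unfolding span_def by (rule addcl.incl) blast

lemma span_zero: "\<zero> \<in> span P"
  unfolding span_def by (rule addcl.zero)

lemma span_add: "a \<in> span P \<Longrightarrow> b \<in> span P \<Longrightarrow> a \<oplus> b \<in> span P"
  unfolding span_def by (rule addcl.add)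

lemma span_mult_left:
  assumes "y \<in> carrier A" and "\<And>c q. c \<in> R \<Longrightarrow> P q \<Longrightarrow> y \<otimes> h c q \<in> span Q"
    and "e \<in> span P"
  shows "y \<otimes> e \<in> span Q"
  using addcl_mult_left[OF assms(1) span_generators_closed, of P] assms(2,3)
  unfolding span_def by blast

lemma span_neg: "e \<in> span P \<Longrightarrow> \<ominus> e \<in> span P"
proof -
  assume e: "e \<in> span P"
  have "\<ominus> \<one> \<otimes> e \<in> span P"
  proof (rule span_mult_left[OF _ _ e])
    fix c q assume "c \<in> R" "P q"
    then show "\<ominus> \<one> \<otimes> h c q \<in> span P"
      using span_gen[OF R_neg] by (simp add: l_minus h_closed h_neg)
  qed simp
  then show ?thesis using span_closed[OF e] by (simp add: l_minus)
qed

lemma span_finsum: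
  "finite I \<Longrightarrow> (\<And>i. i \<in> I \<Longrightarrow> f i \<in> span P) \<Longrightarrow> finsum A f I \<in> span P"
  unfolding span_def by (rule finsum_in_addcl[OF _ span_generators_closed])

lemma comb_extend:
  assumes "coeffs f M" and "M \<le> M'"
  shows "comb f M' = comb f M"
proof -
  have sub: "{..<M} \<times> {..<M} \<subseteq> {..<M'} \<times> {..<M'}" using assms(2) by auto
  show ?thesis
    unfolding comb_def
  proof (rule add.finprod_mono_neutral_cong_right[OF _ sub])
    fix q assume "q \<in> {..<M'} \<times> {..<M'} - {..<M} \<times> {..<M}"
    then show "h (f q) q = \<zero>" using coeffs_outside[OF assms(1)] h_zero by simp
  qed (use coeffs_in_R[OF assms(1)] in \<open>simp_all add: h_closed Pi_def\<close>)
qed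

lemma comb_add:
  assumes f: "coeffs f M" and g: "coeffs g N"
  shows "comb f M \<oplus> comb g N = comb (\<lambda>q. f q \<oplus> g q) (max M N)"
proof -
  have fR: "\<And>q. f q \<in> R" and gR: "\<And>q. g q \<in> R" using f g coeffs_in_R by blast+
  have "comb f M \<oplus> comb g N = comb f (max M N) \<oplus> comb g (max M N)"
    using comb_extend[OF f max.cobounded1] comb_extend[OF g max.cobounded2] by simp
  also have "\<dots> = finsum A (\<lambda>q. h (f q) q \<oplus> h (g q) q) ({..<max M N} \<times> {..<max M N})"
    unfolding comb_def by (rule finsum_addf[symmetric]) (simp_all add: fR gR h_closed Pi_def)
  also have "\<dots> = comb (\<lambda>q. f q \<oplus> g q) (max M N)"
    unfolding comb_def by (rule finsum_cong) (simp_all add: h_add fR gR h_closed Pi_def)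
  finally show ?thesis .
qed

lemma comb_single:
  assumes "c \<in> R" and "fst p < M" and "snd p < M"
  shows "comb (\<lambda>q. if q = p then c else \<zero>) M = h c p"
proof -
  have p: "p \<in> {..<M} \<times> {..<M}" using assms(2,3) by (cases p) auto
  have "\<And>q. h (if q = p then c else \<zero>) q = (if q = p then h c q else \<zero>)"
    by (simp add: h_zero)
  then have "comb (\<lambda>q. if q = p then c else \<zero>) M
      = finsum A (\<lambda>q. if q = p then h c q else \<zero>) ({..<M} \<times> {..<M})"
    unfolding comb_def by simp
  also have "\<dots> = h c p"
    by (rule add.finprod_singleton_swap[OF p]) (simp_all add: h_closed assms Pi_def)
  finally show ?thesis .
qed

lemma comb_eq_imp_coeffs_eq:
  assumes indep: "\<And>f M. coeffs f M \<Longrightarrow> comb f M = \<zero> \<Longrightarrow> f q = \<zero>"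
    and f: "coeffs f M" and g: "coeffs g N" and eq: "comb f M = comb g N"
  shows "f q = g q"
proof -
  have gR: "\<And>q. g q \<in> R" using g coeffs_in_R by blast
  have g': "coeffs (\<lambda>q. \<ominus> g q) N"
    unfolding coeffs_def
  proof (intro conjI allI impI)
    fix q
    show "\<ominus> g q \<in> R" using gR by (rule R_neg)
    assume "q \<notin> {..<N} \<times> {..<N}"
    then show "\<ominus> g q = \<zero>" using coeffs_outside[OF g] by simp
  qed
  have "comb (\<lambda>q. f q \<oplus> \<ominus> g q) (max M N) = comb g N \<oplus> comb (\<lambda>q. \<ominus> g q) N"
    using comb_add[OF f g'] eq by simp
  also have "\<dots> = comb (\<lambda>q. g q \<oplus> \<ominus> g q) N"
    using comb_add[OF g g'] by simp
  also have "\<dots> = \<zero>"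
    unfolding comb_def using gR by (simp add: r_neg h_zero)
  finally have "f q \<oplus> \<ominus> g q = \<zero>"
    by (rule indep[OF coeffs_add[OF f g']])
  moreover have "f q \<in> R" using f coeffs_in_R by blast
  ultimately show ?thesis using gR[of q] by (simp add: minus_eq[symmetric])
qed

lemma span_imp_comb:
  "e \<in> span P \<Longrightarrow> \<exists>f M. coeffs f M \<and> (\<forall>q. \<not> P q \<longrightarrow> f q = \<zero>) \<and> e = comb f M"
  unfolding span_def
proof (induction rule: addcl.induct)
  case zero
  show ?case
    by (intro exI[of _ "\<lambda>q. \<zero>"] exI[of _ 0]) (simp add: coeffs_def comb_def R_zero)
next
  case (incl s)
  then obtain c p where c: "c \<in> R" and "P p" and s: "s = h c p" by blast
  show ?case
  proof (intro exI conjI)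
    show "coeffs (\<lambda>q. if q = p then c else \<zero>) (Suc (max (fst p) (snd p)))"
      using c by (rule coeffs_single) auto
    show "\<forall>q. \<not> P q \<longrightarrow> (if q = p then c else \<zero>) = \<zero>" using \<open>P p\<close> by auto
    show "s = comb (\<lambda>q. if q = p then c else \<zero>) (Suc (max (fst p) (snd p)))"
      using comb_single[OF c, of p "Suc (max (fst p) (snd p))"] s by simp
  qed
next
  case (add a b)
  then obtain f M g N where f: "coeffs f M" "\<forall>q. \<not> P q \<longrightarrow> f q = \<zero>" "a = comb f M"
    and g: "coeffs g N" "\<forall>q. \<not> P q \<longrightarrow> g q = \<zero>" "b = comb g N"
    by blast
  show ?case
  proof (intro exI conjI)
    show "coeffs (\<lambda>q. f q \<oplus> g q) (max M N)" using f(1) g(1) by (rule coeffs_add)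
    show "\<forall>q. \<not> P q \<longrightarrow> f q \<oplus> g q = \<zero>" using f(2) g(2) by simp
    show "a \<oplus> b = comb (\<lambda>q. f q \<oplus> g q) (max M N)"
      using comb_add[OF f(1) g(1)] f(3) g(3) by simp
  qed
qed

end

locale monomial_basis = ring_subring +
  fixes x1 x2 :: 'a
  assumes x1_carrier [simp]: "x1 \<in> carrier A" and x2_carrier [simp]: "x2 \<in> carrier A"
    and left_basis: "left_free_basis A R (mon A x1 x2)"
begin

abbreviation mn :: "nat \<times> nat \<Rightarrow> 'a" where "mn \<equiv> mon A x1 x2"

lemma mon_closed [simp]: "mn q \<in> carrier A"
  unfolding mon_def by simp

lemma mon_0_0: "mn (0, 0) = \<one>"
  unfolding mon_def by simp

lemma mon_1_0: "mn (Suc 0, 0) = x1"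
  unfolding mon_def by simp

lemma mon_0_1: "mn (0, Suc 0) = x2"
  unfolding mon_def by simp

lemma mon_0_eq_pow: "mn (0, b) = x2 [^] b"
  unfolding mon_def by simp

lemma x1_mult_mon: "x1 \<otimes> mn (a, b) = mn (Suc a, b)"
proof -
  have "x1 \<otimes> mn (a, b) = (x1 \<otimes> x1 [^] a) \<otimes> x2 [^] b"
    unfolding mon_def by (simp add: m_assoc)
  also have "\<dots> = mn (Suc a, b)"
    unfolding mon_def by (simp only: fst_conv snd_conv nat_pow_Suc2[OF x1_carrier])
  finally show ?thesis .
qed

lemma x2_mult_mon_0: "x2 \<otimes> mn (0, b) = mn (0, Suc b)"
  unfolding mon_0_eq_pow by (simp only: nat_pow_Suc2[OF x2_carrier])

sublocale Left: one_sided_comb A R "\<lambda>c q. c \<otimes> mn q"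
  by unfold_locales (auto simp: l_distr)

sublocale Right: one_sided_comb A R "\<lambda>c q. mn q \<otimes> c"
  by unfold_locales (auto simp: r_distr)

lemma left_comb_eq_zero: "coeffs f M \<Longrightarrow> Left.comb f M = \<zero> \<Longrightarrow> f q = \<zero>"
proof -
  assume f: "coeffs f M" and zero: "Left.comb f M = \<zero>"
  show "f q = \<zero>"
  proof (cases "q \<in> {..<M} \<times> {..<M}")
    case True
    then show ?thesis
      using left_basis coeffs_in_R[OF f] zero
      unfolding left_free_basis_def Left.comb_def by blast
  next
    case False
    then show ?thesis by (rule coeffs_outside[OF f])
  qed
qed

lemma left_coeffs_unique:
  assumes "a \<in> R" "b \<in> R" "a' \<in> R" "b' \<in> R" and "p \<noteq> (0, 0)"
    and eq: "a \<otimes> mn p \<oplus> b = a' \<otimes> mn p \<oplus> b'"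
  shows "a = a' \<and> b = b'"
proof -
  define F where "F a b q = (if q = p then a else \<zero>) \<oplus> (if q = (0, 0) then b else \<zero>)" for a b q
  define M where "M = Suc (max (fst p) (snd p))"
  have in_box: "fst p < M" "snd p < M" "fst (0::nat, 0::nat) < M" "snd (0::nat, 0::nat) < M"
    unfolding M_def by auto
  have coeffs_F: "coeffs (F a b) M" if "a \<in> R" "b \<in> R" for a b
    using coeffs_add[OF coeffs_single[OF that(1) in_box(1,2)] coeffs_single[OF that(2) in_box(3,4)]]
    unfolding F_def by simp
  have comb_F: "Left.comb (F a b) M = a \<otimes> mn p \<oplus> b" if "a \<in> R" "b \<in> R" for a b
    using Left.comb_add[OF coeffs_single[OF that(1) in_box(1,2)] coeffs_single[OF that(2) in_box(3,4)]]
      Left.comb_single[OF that(1) in_box(1,2)] Left.comb_single[OF that(2) in_box(3,4)] that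
    unfolding F_def by (simp add: mon_0_0)
  have "F a b q = F a' b' q" for q
    using assms by (intro Left.comb_eq_imp_coeffs_eq[OF left_comb_eq_zero coeffs_F coeffs_F]) (simp_all add: comb_F)
  from this[of p] this[of "(0, 0)"] show ?thesis
    using assms unfolding F_def by auto
qed

lemma generate_ring_eq_carrier: "generate_ring A (R \<union> {x1, x2}) = carrier A"
proof
  show "generate_ring A (R \<union> {x1, x2}) \<subseteq> carrier A"
    by (rule generate_ring_incl) auto
next
  define G where "G = generate_ring A (R \<union> {x1, x2})"
  have G: "subring G A"
    unfolding G_def by (rule generate_ring_is_subring) auto
  have gens: "R \<union> {x1, x2} \<subseteq> G"
    unfolding G_def by (auto intro: generate_ring.incl)
  have pow: "x [^] (n::nat) \<in> G" if "x \<in> G" for x n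
    using that subringE(3,6)[OF G] by (induction n) auto
  have mon: "mn q \<in> G" for q
    unfolding mon_def using pow gens subringE(6)[OF G] by auto
  have addcl_G: "e \<in> G" if "e \<in> addcl A G" for e
    using that by induction (auto simp: subringE(2,7)[OF G])
  show "carrier A \<subseteq> G"
  proof
    fix a assume "a \<in> carrier A"
    then obtain N c where c: "\<forall>q. c q \<in> R" and a: "a = finsum A (\<lambda>q. c q \<otimes> mn q) ({..<N} \<times> {..<N})"
      using left_basis unfolding left_free_basis_def by blast
    have "c q \<otimes> mn q \<in> G" for q
      using c gens mon subringE(6)[OF G] by blast
    then have "a \<in> addcl A G"
      unfolding a by (intro finsum_in_addcl subringE(1)[OF G] addcl.incl) auto
    then show "a \<in> G" by (rule addcl_G)
  qed
qed

end

locale skew_variable = ring_subring +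
  fixes x :: 'a and \<sigma> \<delta> :: "'a \<Rightarrow> 'a"
  assumes x_carrier [simp]: "x \<in> carrier A"
    and skew_commute: "r \<in> R \<Longrightarrow> \<sigma> r \<in> R \<and> \<delta> r \<in> R \<and> x \<otimes> r = \<sigma> r \<otimes> x \<oplus> \<delta> r"
    and bij_sigma: "bij_betw \<sigma> R R"
    and linear_coeffs_unique:
      "\<lbrakk>a \<in> R; b \<in> R; a' \<in> R; b' \<in> R; a \<otimes> x \<oplus> b = a' \<otimes> x \<oplus> b'\<rbrakk> \<Longrightarrow> a = a' \<and> b = b'"
begin

lemma sigma_closed: "r \<in> R \<Longrightarrow> \<sigma> r \<in> R"
  and delta_closed: "r \<in> R \<Longrightarrow> \<delta> r \<in> R"
  and x_mult: "r \<in> R \<Longrightarrow> x \<otimes> r = \<sigma> r \<otimes> x \<oplus> \<delta> r"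
  using skew_commute by auto

lemma sigma_zero: "\<sigma> \<zero> = \<zero>"
proof -
  have "\<sigma> \<zero> \<otimes> x \<oplus> \<delta> \<zero> = \<zero> \<otimes> x \<oplus> \<zero>"
    using x_mult[OF R_zero, symmetric] by simp
  then have "\<sigma> \<zero> = \<zero> \<and> \<delta> \<zero> = \<zero>"
    by (rule linear_coeffs_unique[rotated 4]) (simp_all add: R_zero sigma_closed delta_closed)
  then show ?thesis by (rule conjunct1)
qed

lemma sigma_add: "r \<in> R \<Longrightarrow> s \<in> R \<Longrightarrow> \<sigma> (r \<oplus> s) = \<sigma> r \<oplus> \<sigma> s"
proof -
  assume r: "r \<in> R" and s: "s \<in> R"
  have [simp]: "\<sigma> r \<in> carrier A" "\<sigma> s \<in> carrier A" "\<delta> r \<in> carrier A" "\<delta> s \<in> carrier A"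
    using r s sigma_closed delta_closed by auto
  have "\<sigma> (r \<oplus> s) \<otimes> x \<oplus> \<delta> (r \<oplus> s) = x \<otimes> r \<oplus> x \<otimes> s"
    using r s by (simp add: x_mult[OF R_add[OF r s], symmetric] r_distr)
  also have "\<dots> = (\<sigma> r \<otimes> x \<oplus> \<delta> r) \<oplus> (\<sigma> s \<otimes> x \<oplus> \<delta> s)"
    using r s by (simp only: x_mult)
  also have "\<dots> = (\<sigma> r \<otimes> x \<oplus> \<sigma> s \<otimes> x) \<oplus> (\<delta> r \<oplus> \<delta> s)"
    by (simp add: a_ac)
  also have "\<dots> = (\<sigma> r \<oplus> \<sigma> s) \<otimes> x \<oplus> (\<delta> r \<oplus> \<delta> s)"
    by (simp add: l_distr)
  finally have "\<sigma> (r \<oplus> s) = \<sigma> r \<oplus> \<sigma> s \<and> \<delta> (r \<oplus> s) = \<delta> r \<oplus> \<delta> s"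
    by (rule linear_coeffs_unique[rotated 4]) (use r s in \<open>simp_all add: R_add sigma_closed delta_closed\<close>)
  then show ?thesis by (rule conjunct1)
qed

lemma sigma_pow_closed: "c \<in> R \<Longrightarrow> (\<sigma> ^^ k) c \<in> R"
  by (induction k) (auto simp: sigma_closed)

lemma sigma_pow_eq_zero_iff: "c \<in> R \<Longrightarrow> (\<sigma> ^^ k) c = \<zero> \<longleftrightarrow> c = \<zero>"
proof (induction k)
  case (Suc k)
  have "(\<sigma> ^^ Suc k) c = \<zero> \<longleftrightarrow> \<sigma> ((\<sigma> ^^ k) c) = \<sigma> \<zero>"
    by (simp add: sigma_zero)
  also have "\<dots> \<longleftrightarrow> (\<sigma> ^^ k) c = \<zero>"
    using bij_betw_imp_inj_on[OF bij_sigma] sigma_pow_closed[OF Suc.prems] R_zero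
    by (auto dest: inj_onD)
  finally show ?case using Suc by simp
qed simp

lemma sigma_surj: "r \<in> R \<Longrightarrow> \<exists>r'\<in>R. \<sigma> r' = r"
  using bij_sigma unfolding bij_betw_def by (metis imageE)

lemma x_mult_assoc:
  assumes "t \<in> R" and "m \<in> carrier A"
  shows "x \<otimes> (t \<otimes> m) = \<sigma> t \<otimes> (x \<otimes> m) \<oplus> \<delta> t \<otimes> m"
  using assms by (simp add: m_assoc[symmetric] x_mult l_distr sigma_closed delta_closed)

lemma x_mult_add:
  assumes "t \<in> R" and "m \<in> carrier A" and "l \<in> carrier A"
  shows "x \<otimes> (t \<otimes> m \<oplus> l) = \<sigma> t \<otimes> (x \<otimes> m) \<oplus> (\<delta> t \<otimes> m \<oplus> x \<otimes> l)"
  using assms by (simp add: r_distr x_mult_assoc sigma_closed delta_closed a_assoc)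

lemma sigma_mult_x:
  assumes "r \<in> R" and "w \<in> carrier A"
  shows "\<sigma> r \<otimes> (x \<otimes> w) = x \<otimes> (r \<otimes> w) \<oplus> \<ominus> (\<delta> r \<otimes> w)"
proof (rule eq_add_imp_eq_minus)
  show "x \<otimes> (r \<otimes> w) = \<sigma> r \<otimes> (x \<otimes> w) \<oplus> \<delta> r \<otimes> w"
    by (rule x_mult_assoc[OF assms])
qed (use assms in \<open>simp_all add: sigma_closed delta_closed\<close>)

end

section \<open>Skew PBW extensions in two variables\<close>

definition tdeg :: "nat \<times> nat \<Rightarrow> nat" where
  "tdeg q = fst q + snd q"

locale two_var_PBW = monomial_basis +
  fixes \<sigma>1 \<delta>1 \<sigma>2 \<delta>2 :: "'a \<Rightarrow> 'a" and c r0 r1 r2 :: 'a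
  assumes skew_commute1: "r \<in> R \<Longrightarrow> \<sigma>1 r \<in> R \<and> \<delta>1 r \<in> R \<and> x1 \<otimes> r = \<sigma>1 r \<otimes> x1 \<oplus> \<delta>1 r"
    and bij_sigma1: "bij_betw \<sigma>1 R R"
    and skew_commute2: "r \<in> R \<Longrightarrow> \<sigma>2 r \<in> R \<and> \<delta>2 r \<in> R \<and> x2 \<otimes> r = \<sigma>2 r \<otimes> x2 \<oplus> \<delta>2 r"
    and bij_sigma2: "bij_betw \<sigma>2 R R"
    and relation_coeffs: "c \<in> R" "r0 \<in> R" "r1 \<in> R" "r2 \<in> R"
    and relation: "x2 \<otimes> x1 = c \<otimes> x1 \<otimes> x2 \<oplus> (r0 \<oplus> r1 \<otimes> x1 \<oplus> r2 \<otimes> x2)"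
    and c_central: "a \<in> carrier A \<Longrightarrow> c \<otimes> a = a \<otimes> c"
begin

sublocale X1: skew_variable A R x1 \<sigma>1 \<delta>1
proof unfold_locales
  show "\<sigma>1 r \<in> R \<and> \<delta>1 r \<in> R \<and> x1 \<otimes> r = \<sigma>1 r \<otimes> x1 \<oplus> \<delta>1 r" if "r \<in> R" for r
    using that by (rule skew_commute1)
  show "a = a' \<and> b = b'"
    if "a \<in> R" "b \<in> R" "a' \<in> R" "b' \<in> R" "a \<otimes> x1 \<oplus> b = a' \<otimes> x1 \<oplus> b'" for a b a' b'
    using left_coeffs_unique[of a b a' b' "(Suc 0, 0)"] that by (simp add: mon_1_0)
qed (simp_all add: bij_sigma1)

sublocale X2: skew_variable A R x2 \<sigma>2 \<delta>2
proof unfold_locales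
  show "\<sigma>2 r \<in> R \<and> \<delta>2 r \<in> R \<and> x2 \<otimes> r = \<sigma>2 r \<otimes> x2 \<oplus> \<delta>2 r" if "r \<in> R" for r
    using that by (rule skew_commute2)
  show "a = a' \<and> b = b'"
    if "a \<in> R" "b \<in> R" "a' \<in> R" "b' \<in> R" "a \<otimes> x2 \<oplus> b = a' \<otimes> x2 \<oplus> b'" for a b a' b'
    using left_coeffs_unique[of a b a' b' "(0, Suc 0)"] that by (simp add: mon_0_1)
qed (simp_all add: bij_sigma2)

abbreviation lspan :: "nat \<Rightarrow> 'a set" where
  "lspan D \<equiv> Left.span (\<lambda>q. tdeg q < D)"

abbreviation rspan :: "nat \<Rightarrow> 'a set" where
  "rspan D \<equiv> Right.span (\<lambda>q. tdeg q < D)"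

lemma lspan_mono: "D \<le> D' \<Longrightarrow> e \<in> lspan D \<Longrightarrow> e \<in> lspan D'"
  by (erule Left.span_mono[rotated]) simp

lemma rspan_mono: "D \<le> D' \<Longrightarrow> e \<in> rspan D \<Longrightarrow> e \<in> rspan D'"
  by (erule Right.span_mono[rotated]) simp

lemma lspan_mult_R:
  assumes r: "r \<in> R" and e: "e \<in> Left.span P"
  shows "r \<otimes> e \<in> Left.span P"
proof (rule Left.span_mult_left[OF R_carrier[OF r] _ e])
  fix a q assume "a \<in> R" "P q"
  with r show "r \<otimes> (a \<otimes> mn q) \<in> Left.span P"
    using Left.span_gen[OF R_mult] by (simp add: m_assoc[symmetric])
qed

lemma lspan_mult_x1: "e \<in> lspan D \<Longrightarrow> x1 \<otimes> e \<in> lspan (Suc D)"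
proof (erule Left.span_mult_left[OF x1_carrier, rotated])
  fix a q assume a: "a \<in> R" and "tdeg q < D"
  obtain i j where q: "q = (i, j)" by (cases q)
  have "x1 \<otimes> (a \<otimes> mn q) = \<sigma>1 a \<otimes> mn (Suc i, j) \<oplus> \<delta>1 a \<otimes> mn q"
    using X1.x_mult_assoc[OF a mon_closed] by (simp add: q x1_mult_mon)
  moreover have "\<sigma>1 a \<otimes> mn (Suc i, j) \<in> lspan (Suc D)" "\<delta>1 a \<otimes> mn q \<in> lspan (Suc D)"
    using \<open>tdeg q < D\<close> a X1.sigma_closed X1.delta_closed
    by (auto simp: q tdeg_def intro!: Left.span_gen)
  ultimately show "x1 \<otimes> (a \<otimes> mn q) \<in> lspan (Suc D)"
    by (simp add: Left.span_add)
qed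

lemma relation_mult:
  assumes "w \<in> carrier A"
  shows "x2 \<otimes> (x1 \<otimes> w) = c \<otimes> (x1 \<otimes> (x2 \<otimes> w)) \<oplus> (r0 \<otimes> w \<oplus> r1 \<otimes> (x1 \<otimes> w) \<oplus> r2 \<otimes> (x2 \<otimes> w))"
proof -
  have "x2 \<otimes> (x1 \<otimes> w) = (x2 \<otimes> x1) \<otimes> w" using assms by (simp add: m_assoc)
  also have "\<dots> = c \<otimes> (x1 \<otimes> (x2 \<otimes> w)) \<oplus> (r0 \<otimes> w \<oplus> r1 \<otimes> (x1 \<otimes> w) \<oplus> r2 \<otimes> (x2 \<otimes> w))"
    unfolding relation using assms relation_coeffs by (simp add: l_distr m_assoc)
  finally show ?thesis .
qed

lemma x2_mult_mon_in_lspan: "x2 \<otimes> mn (a, b) \<in> lspan (a + b + 2)"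
proof (induction a)
  case 0
  have "x2 \<otimes> mn (0, b) = \<one> \<otimes> mn (0, Suc b)" by (simp add: x2_mult_mon_0)
  then show ?case using Left.span_gen[OF R_one, of "\<lambda>q. tdeg q < 0 + b + 2" "(0, Suc b)"]
    by (simp add: tdeg_def)
next
  case (Suc a)
  let ?S = "lspan (Suc a + b + 2)"
  have eq: "x2 \<otimes> mn (Suc a, b) = c \<otimes> (x1 \<otimes> (x2 \<otimes> mn (a, b))) \<oplus>
      (r0 \<otimes> mn (a, b) \<oplus> r1 \<otimes> mn (Suc a, b) \<oplus> r2 \<otimes> (x2 \<otimes> mn (a, b)))"
    using relation_mult[OF mon_closed, of "(a, b)"] by (simp add: x1_mult_mon)
  have "c \<otimes> (x1 \<otimes> (x2 \<otimes> mn (a, b))) \<in> ?S"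
    using lspan_mult_x1[OF Suc.IH] by (intro lspan_mult_R[OF relation_coeffs(1)]) simp
  moreover have "r0 \<otimes> mn (a, b) \<in> ?S" "r1 \<otimes> mn (Suc a, b) \<in> ?S"
    using relation_coeffs by (auto intro!: Left.span_gen simp: tdeg_def)
  moreover have "r2 \<otimes> (x2 \<otimes> mn (a, b)) \<in> ?S"
    using lspan_mono[OF _ Suc.IH] by (intro lspan_mult_R[OF relation_coeffs(4)]) simp
  ultimately show ?case
    unfolding eq by (intro Left.span_add)
qed

lemma lspan_mult_x2: "e \<in> lspan D \<Longrightarrow> x2 \<otimes> e \<in> lspan (Suc D)"
proof (erule Left.span_mult_left[OF x2_carrier, rotated])
  fix a q assume a: "a \<in> R" and "tdeg q < D"
  obtain i j where q: "q = (i, j)" by (cases q)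
  have "x2 \<otimes> (a \<otimes> mn q) = \<sigma>2 a \<otimes> (x2 \<otimes> mn q) \<oplus> \<delta>2 a \<otimes> mn q"
    using X2.x_mult_assoc[OF a mon_closed] .
  moreover have "x2 \<otimes> mn q \<in> lspan (Suc D)"
    using lspan_mono[OF _ x2_mult_mon_in_lspan[of i j]] \<open>tdeg q < D\<close> by (simp add: q tdeg_def)
  moreover have "\<delta>2 a \<otimes> mn q \<in> lspan (Suc D)"
    using \<open>tdeg q < D\<close> a X2.delta_closed by (auto intro!: Left.span_gen)
  ultimately show "x2 \<otimes> (a \<otimes> mn q) \<in> lspan (Suc D)"
    using a X2.sigma_closed by (simp add: Left.span_add lspan_mult_R)
qed

definition sigma_mon :: "nat \<times> nat \<Rightarrow> 'a \<Rightarrow> 'a" where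
  "sigma_mon q r = (\<sigma>1 ^^ fst q) ((\<sigma>2 ^^ snd q) r)"

lemma sigma_mon_closed: "r \<in> R \<Longrightarrow> sigma_mon q r \<in> R"
  unfolding sigma_mon_def by (intro X1.sigma_pow_closed X2.sigma_pow_closed)

lemma sigma_mon_eq_zero_iff: "r \<in> R \<Longrightarrow> sigma_mon q r = \<zero> \<longleftrightarrow> r = \<zero>"
  unfolding sigma_mon_def by (simp add: X1.sigma_pow_eq_zero_iff X2.sigma_pow_eq_zero_iff X2.sigma_pow_closed)

lemma mon_0_mult_leading:
  assumes "r \<in> R"
  shows "\<exists>l\<in>lspan b. mn (0, b) \<otimes> r = (\<sigma>2 ^^ b) r \<otimes> mn (0, b) \<oplus> l"
proof (induction b)
  case 0
  show ?case using assms by (intro bexI[of _ \<zero>]) (simp_all add: mon_0_0 Left.span_zero)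
next
  case (Suc b)
  then obtain l where l: "l \<in> lspan b" and eq: "mn (0, b) \<otimes> r = (\<sigma>2 ^^ b) r \<otimes> mn (0, b) \<oplus> l"
    by blast
  let ?t = "(\<sigma>2 ^^ b) r"
  have t: "?t \<in> R" using X2.sigma_pow_closed[OF assms] .
  have "mn (0, Suc b) \<otimes> r = x2 \<otimes> (?t \<otimes> mn (0, b) \<oplus> l)"
    using assms by (simp add: x2_mult_mon_0[symmetric] m_assoc eq)
  also have "\<dots> = \<sigma>2 ?t \<otimes> mn (0, Suc b) \<oplus> (\<delta>2 ?t \<otimes> mn (0, b) \<oplus> x2 \<otimes> l)"
    using X2.x_mult_add[OF t mon_closed Left.span_closed[OF l]] by (simp add: x2_mult_mon_0)
  finally have "mn (0, Suc b) \<otimes> r = (\<sigma>2 ^^ Suc b) r \<otimes> mn (0, Suc b) \<oplus> (\<delta>2 ?t \<otimes> mn (0, b) \<oplus> x2 \<otimes> l)"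
    by simp
  moreover have "\<delta>2 ?t \<otimes> mn (0, b) \<oplus> x2 \<otimes> l \<in> lspan (Suc b)"
    using X2.delta_closed[OF t] lspan_mult_x2[OF l]
    by (intro Left.span_add Left.span_gen) (simp_all add: tdeg_def)
  ultimately show ?case by blast
qed

lemma mon_mult_leading:
  assumes "r \<in> R"
  shows "\<exists>l\<in>lspan (tdeg q). mn q \<otimes> r = sigma_mon q r \<otimes> mn q \<oplus> l"
proof -
  obtain a b where q: "q = (a, b)" by (cases q)
  have "\<exists>l\<in>lspan (a + b). mn (a, b) \<otimes> r = sigma_mon (a, b) r \<otimes> mn (a, b) \<oplus> l"
  proof (induction a)
    case 0
    then show ?case using mon_0_mult_leading[OF assms] by (simp add: sigma_mon_def)
  next
    case (Suc a)
    then obtain l where l: "l \<in> lspan (a + b)"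
      and eq: "mn (a, b) \<otimes> r = sigma_mon (a, b) r \<otimes> mn (a, b) \<oplus> l" by blast
    let ?t = "sigma_mon (a, b) r"
    have t: "?t \<in> R" using sigma_mon_closed[OF assms] .
    have "mn (Suc a, b) \<otimes> r = x1 \<otimes> (?t \<otimes> mn (a, b) \<oplus> l)"
      using assms by (simp add: x1_mult_mon[symmetric] m_assoc eq)
    also have "\<dots> = \<sigma>1 ?t \<otimes> mn (Suc a, b) \<oplus> (\<delta>1 ?t \<otimes> mn (a, b) \<oplus> x1 \<otimes> l)"
      using X1.x_mult_add[OF t mon_closed Left.span_closed[OF l]] by (simp add: x1_mult_mon)
    finally have "mn (Suc a, b) \<otimes> r = sigma_mon (Suc a, b) r \<otimes> mn (Suc a, b) \<oplus> (\<delta>1 ?t \<otimes> mn (a, b) \<oplus> x1 \<otimes> l)"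
      by (simp add: sigma_mon_def)
    moreover have "\<delta>1 ?t \<otimes> mn (a, b) \<oplus> x1 \<otimes> l \<in> lspan (Suc a + b)"
      using X1.delta_closed[OF t] lspan_mult_x1[OF l]
      by (intro Left.span_add Left.span_gen) (simp_all add: tdeg_def)
    ultimately show ?case by blast
  qed
  then show ?thesis by (simp add: q tdeg_def)
qed

lemma mon_Suc_mult: "r \<in> carrier A \<Longrightarrow> mn (Suc a, b) \<otimes> r = x1 \<otimes> (mn (a, b) \<otimes> r)"
  by (simp add: x1_mult_mon[symmetric] m_assoc)

lemma mon_0_Suc_mult: "r \<in> carrier A \<Longrightarrow> mn (0, Suc b) \<otimes> r = x2 \<otimes> (mn (0, b) \<otimes> r)"
  by (simp add: x2_mult_mon_0[symmetric] m_assoc)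

lemma rspan_mult_c: "e \<in> Right.span P \<Longrightarrow> c \<otimes> e \<in> Right.span P"
proof (erule Right.span_mult_left[OF R_carrier[OF relation_coeffs(1)], rotated])
  fix a q assume a: "a \<in> R" and "P q"
  have "c \<otimes> (mn q \<otimes> a) = (c \<otimes> mn q) \<otimes> a"
    using a relation_coeffs(1) by (simp add: m_assoc)
  also have "\<dots> = mn q \<otimes> (c \<otimes> a)"
    using a relation_coeffs(1) by (simp add: c_central[of "mn q"] m_assoc)
  finally show "c \<otimes> (mn q \<otimes> a) \<in> Right.span P"
    using Right.span_gen[where P = P and q = q, OF R_mult[OF relation_coeffs(1) a] \<open>P q\<close>] by simp
qed

lemma rspan_mult_x1: "e \<in> rspan D \<Longrightarrow> x1 \<otimes> e \<in> rspan (Suc D)"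
proof (erule Right.span_mult_left[OF x1_carrier, rotated])
  fix a q assume a: "a \<in> R" and "tdeg q < D"
  obtain i j where q: "q = (i, j)" by (cases q)
  have "x1 \<otimes> (mn q \<otimes> a) = mn (Suc i, j) \<otimes> a"
    using a by (simp add: q mon_Suc_mult)
  then show "x1 \<otimes> (mn q \<otimes> a) \<in> rspan (Suc D)"
    using Right.span_gen[OF a, of "\<lambda>q. tdeg q < Suc D" "(Suc i, j)"] \<open>tdeg q < D\<close>
    by (simp add: q tdeg_def)
qed

lemma rspan_mult_R_skew:
  fixes x :: 'a and \<sigma> \<delta> :: "'a \<Rightarrow> 'a"
  assumes "skew_variable A R x \<sigma> \<delta>"
    and IH_R: "\<And>r e. r \<in> R \<Longrightarrow> e \<in> rspan D \<Longrightarrow> r \<otimes> e \<in> rspan D"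
    and x_step: "\<And>e. e \<in> rspan D \<Longrightarrow> x \<otimes> e \<in> rspan (Suc D)"
    and r: "r \<in> R" and w: "w \<in> rspan D"
  shows "r \<otimes> (x \<otimes> w) \<in> rspan (Suc D)"
proof -
  interpret X: skew_variable A R x \<sigma> \<delta> by fact
  obtain r' where r': "r' \<in> R" "\<sigma> r' = r" using X.sigma_surj[OF r] by blast
  have "r \<otimes> (x \<otimes> w) = x \<otimes> (r' \<otimes> w) \<oplus> \<ominus> (\<delta> r' \<otimes> w)"
    using X.sigma_mult_x[OF r'(1) Right.span_closed[OF w]] r'(2) by simp
  moreover have "x \<otimes> (r' \<otimes> w) \<in> rspan (Suc D)"
    by (rule x_step[OF IH_R[OF r'(1) w]])
  moreover have "\<ominus> (\<delta> r' \<otimes> w) \<in> rspan (Suc D)"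
    by (rule Right.span_neg[OF rspan_mono[OF _ IH_R[OF X.delta_closed[OF r'(1)] w]]]) simp
  ultimately show ?thesis by (simp add: Right.span_add)
qed

lemma rspan_mult_R_step:
  assumes IH_R: "\<And>r e. r \<in> R \<Longrightarrow> e \<in> rspan D \<Longrightarrow> r \<otimes> e \<in> rspan D"
    and IH_x2: "\<And>e. e \<in> rspan D \<Longrightarrow> x2 \<otimes> e \<in> rspan (Suc D)"
    and r: "r \<in> R" and e: "e \<in> rspan (Suc D)"
  shows "r \<otimes> e \<in> rspan (Suc D)"
proof (rule Right.span_mult_left[OF R_carrier[OF r] _ e])
  fix a q assume a: "a \<in> R" and deg: "tdeg q < Suc D"
  obtain i j where q: "q = (i, j)" by (cases q)
  show "r \<otimes> (mn q \<otimes> a) \<in> rspan (Suc D)"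
  proof (cases i)
    case (Suc i')
    have "mn (i', j) \<otimes> a \<in> rspan D"
      using a deg by (intro Right.span_gen) (simp_all add: q Suc tdeg_def)
    from rspan_mult_R_skew[OF X1.skew_variable_axioms IH_R rspan_mult_x1 r this]
    show ?thesis using a by (simp add: q Suc mon_Suc_mult)
  next
    case 0
    show ?thesis
    proof (cases j)
      case 0
      have "r \<otimes> (mn q \<otimes> a) = mn q \<otimes> (r \<otimes> a)"
        using r a by (simp add: q \<open>i = 0\<close> 0 mon_0_0)
      then show ?thesis using Right.span_gen[OF R_mult[OF r a]] deg by simp
    next
      case (Suc j')
      have "mn (0, j') \<otimes> a \<in> rspan D"
        using a deg by (intro Right.span_gen) (simp_all add: q \<open>i = 0\<close> Suc tdeg_def)
      from rspan_mult_R_skew[OF X2.skew_variable_axioms IH_R IH_x2 r this]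
      show ?thesis using a by (simp add: q \<open>i = 0\<close> Suc mon_0_Suc_mult)
    qed
  qed
qed

lemma rspan_mult_x2_step:
  assumes R_closed: "\<And>r e. r \<in> R \<Longrightarrow> e \<in> rspan (Suc D) \<Longrightarrow> r \<otimes> e \<in> rspan (Suc D)"
    and IH_x2: "\<And>e. e \<in> rspan D \<Longrightarrow> x2 \<otimes> e \<in> rspan (Suc D)"
    and e: "e \<in> rspan (Suc D)"
  shows "x2 \<otimes> e \<in> rspan (Suc (Suc D))"
proof (rule Right.span_mult_left[OF x2_carrier _ e])
  fix a q assume a: "a \<in> R" and deg: "tdeg q < Suc D"
  obtain i j where q: "q = (i, j)" by (cases q)
  show "x2 \<otimes> (mn q \<otimes> a) \<in> rspan (Suc (Suc D))"
  proof (cases i)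
    case 0
    have "x2 \<otimes> (mn q \<otimes> a) = mn (0, Suc j) \<otimes> a"
      using a by (simp add: q 0 mon_0_Suc_mult)
    then show ?thesis
      using Right.span_gen[OF a, of "\<lambda>q. tdeg q < Suc (Suc D)" "(0, Suc j)"] deg
      by (simp add: q 0 tdeg_def)
  next
    case (Suc i')
    let ?S = "rspan (Suc (Suc D))"
    let ?w = "mn (i', j) \<otimes> a"
    have w: "?w \<in> rspan D"
      using a deg by (intro Right.span_gen) (simp_all add: q Suc tdeg_def)
    have eq: "x2 \<otimes> (mn q \<otimes> a) =
        c \<otimes> (x1 \<otimes> (x2 \<otimes> ?w)) \<oplus> (r0 \<otimes> ?w \<oplus> r1 \<otimes> (x1 \<otimes> ?w) \<oplus> r2 \<otimes> (x2 \<otimes> ?w))"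
      using relation_mult[OF Right.span_closed[OF w]] a by (simp add: q Suc mon_Suc_mult)
    have "c \<otimes> (x1 \<otimes> (x2 \<otimes> ?w)) \<in> ?S"
      by (rule rspan_mult_c[OF rspan_mult_x1[OF IH_x2[OF w]]])
    moreover have "r0 \<otimes> ?w \<in> ?S"
      by (rule rspan_mono[OF _ R_closed[OF relation_coeffs(2) rspan_mono[OF _ w]]]) simp_all
    moreover have "r1 \<otimes> (x1 \<otimes> ?w) \<in> ?S"
      by (rule rspan_mono[OF _ R_closed[OF relation_coeffs(3) rspan_mult_x1[OF w]]]) simp
    moreover have "r2 \<otimes> (x2 \<otimes> ?w) \<in> ?S"
      by (rule rspan_mono[OF _ R_closed[OF relation_coeffs(4) IH_x2[OF w]]]) simp
    ultimately show ?thesis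
      unfolding eq by (intro Right.span_add)
  qed
qed

text \<open>Both closure properties are needed at once: \<open>r x\<^sub>1 w\<close> is reduced using \<open>R\<close>-closure in lower
  degree, \<open>x\<^sub>2 x\<^sub>1 w\<close> using the relation and \<open>R\<close>-closure in the same degree.\<close>

lemma rspan_mult_R_and_x2:
  "(\<forall>r\<in>R. \<forall>e\<in>rspan D. r \<otimes> e \<in> rspan D) \<and> (\<forall>e\<in>rspan D. x2 \<otimes> e \<in> rspan (Suc D))"
proof (induction D)
  case 0
  have "y \<otimes> e \<in> Right.span P" if "y \<in> carrier A" "e \<in> rspan 0" for y e P
    by (rule Right.span_mult_left[OF that(1) _ that(2)]) simp
  then show ?case by simp
next
  case (Suc D)
  have R_closed: "r \<otimes> e \<in> rspan (Suc D)" if "r \<in> R" "e \<in> rspan (Suc D)" for r e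
    using Suc.IH that by (rule_tac rspan_mult_R_step) simp_all
  moreover have "x2 \<otimes> e \<in> rspan (Suc (Suc D))" if "e \<in> rspan (Suc D)" for e
    using Suc.IH R_closed that by (rule_tac rspan_mult_x2_step) simp_all
  ultimately show ?case by simp
qed

lemma rspan_mult_R: "r \<in> R \<Longrightarrow> e \<in> rspan D \<Longrightarrow> r \<otimes> e \<in> rspan D"
  using rspan_mult_R_and_x2 by simp

section \<open>Standard monomials as a right basis\<close>

lemma right_span:
  assumes "a \<in> carrier A"
  shows "\<exists>N f. (\<forall>q. f q \<in> R) \<and> a = finsum A (\<lambda>q. mn q \<otimes> f q) ({..<N} \<times> {..<N})"
proof -
  obtain N f where f: "\<forall>q. f q \<in> R" and a: "a = finsum A (\<lambda>q. f q \<otimes> mn q) ({..<N} \<times> {..<N})"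
    using left_basis assms unfolding left_free_basis_def by blast
  have "f q \<otimes> mn q \<in> Right.span (\<lambda>_. True)" for q
  proof -
    have "mn q \<in> rspan (Suc (tdeg q))"
      using Right.span_gen[OF R_one, of "\<lambda>q'. tdeg q' < Suc (tdeg q)" q] by simp
    then have "f q \<otimes> mn q \<in> rspan (Suc (tdeg q))"
      by (rule rspan_mult_R[OF f[rule_format]])
    then show ?thesis
      by (rule Right.span_mono[rotated]) simp
  qed
  then have "a \<in> Right.span (\<lambda>_. True)"
    unfolding a by (simp add: Right.span_finsum)
  then obtain g M where "coeffs g M" "a = Right.comb g M"
    using Right.span_imp_comb by blast
  then show ?thesis
    unfolding Right.comb_def using coeffs_in_R by blast
qed

lemma mon_mult_top_degree:
  assumes r: "r \<in> R" and deg: "r \<noteq> \<zero> \<Longrightarrow> tdeg p \<le> D"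
  shows "\<exists>l\<in>lspan D. mn p \<otimes> r = (if tdeg p = D then sigma_mon p r else \<zero>) \<otimes> mn p \<oplus> l"
proof (cases "r = \<zero>")
  case True
  then show ?thesis
    using sigma_mon_eq_zero_iff[OF R_zero] by (intro bexI[of _ \<zero>]) (simp_all add: Left.span_zero)
next
  case False
  obtain l where l: "l \<in> lspan (tdeg p)" and eq: "mn p \<otimes> r = sigma_mon p r \<otimes> mn p \<oplus> l"
    using mon_mult_leading[OF r] by blast
  show ?thesis
  proof (cases "tdeg p = D")
    case True
    then show ?thesis using l eq by auto
  next
    case False
    then have "tdeg p < D" using deg \<open>r \<noteq> \<zero>\<close> by fastforce
    then have "sigma_mon p r \<otimes> mn p \<oplus> l \<in> lspan D"
      using Left.span_add[OF Left.span_gen[OF sigma_mon_closed[OF r]] lspan_mono[OF _ l]] by simp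
    then show ?thesis
      using eq False sigma_mon_closed[OF r] Left.span_closed[OF l] by (intro bexI) simp_all
  qed
qed

lemma right_comb_top_part:
  assumes f: "\<forall>q. f q \<in> R"
    and deg: "\<And>q. q \<in> {..<N} \<times> {..<N} \<Longrightarrow> f q \<noteq> \<zero> \<Longrightarrow> tdeg q \<le> D"
    and t: "\<And>q. t q = (if q \<in> {..<N} \<times> {..<N} \<and> tdeg q = D then sigma_mon q (f q) else \<zero>)"
  shows "\<exists>l\<in>lspan D. finsum A (\<lambda>q. mn q \<otimes> f q) ({..<N} \<times> {..<N}) = Left.comb t N \<oplus> l"
proof -
  let ?B = "{..<N} \<times> {..<N}"
  have "\<exists>l\<in>lspan D. mn q \<otimes> f q = t q \<otimes> mn q \<oplus> l" if "q \<in> ?B" for q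
    using mon_mult_top_degree[of "f q" q D] f deg that by (simp add: t)
  then obtain l where l: "\<And>q. q \<in> ?B \<Longrightarrow> l q \<in> lspan D"
    and split: "\<And>q. q \<in> ?B \<Longrightarrow> mn q \<otimes> f q = t q \<otimes> mn q \<oplus> l q"
    by metis
  have tR: "t q \<in> R" for q
    unfolding t using sigma_mon_closed[OF f[rule_format]] R_zero by simp
  have "finsum A (\<lambda>q. mn q \<otimes> f q) ?B = finsum A (\<lambda>q. t q \<otimes> mn q \<oplus> l q) ?B"
    using f tR Left.span_closed[OF l] by (intro finsum_cong) (auto simp: split)
  also have "\<dots> = Left.comb t N \<oplus> finsum A l ?B"
    unfolding Left.comb_def using tR Left.span_closed[OF l] by (intro finsum_addf) auto
  finally show ?thesis
    using l by (intro bexI[of _ "finsum A l ?B"]) (simp_all add: Left.span_finsum)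
qed

text \<open>Independence: compare the coefficients of the monomials of the top degree \<open>D\<close> among
  those with non-zero coefficient.\<close>

lemma right_comb_eq_zero:
  assumes f: "\<forall>q. f q \<in> R" and zero: "finsum A (\<lambda>q. mn q \<otimes> f q) ({..<N} \<times> {..<N}) = \<zero>"
  shows "\<forall>q\<in>{..<N} \<times> {..<N}. f q = \<zero>"
proof (rule ccontr)
  let ?B = "{..<N} \<times> {..<N}"
  let ?Z = "{q \<in> ?B. f q \<noteq> \<zero>}"
  assume "\<not> (\<forall>q\<in>?B. f q = \<zero>)"
  then have Z: "?Z \<noteq> {}" by blast
  define D where "D = Max (tdeg ` ?Z)"
  have deg: "tdeg q \<le> D" if "q \<in> ?B" "f q \<noteq> \<zero>" for q
    unfolding D_def using that by (intro Max_ge) auto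
  have "D \<in> tdeg ` ?Z"
    unfolding D_def using Z by (intro Max_in) auto
  then obtain p where "p \<in> ?Z" and "D = tdeg p" by (rule imageE)
  then have p: "p \<in> ?B" "f p \<noteq> \<zero>" "tdeg p = D" by auto
  define t where "t q = (if q \<in> ?B \<and> tdeg q = D then sigma_mon q (f q) else \<zero>)" for q
  obtain l where l: "l \<in> lspan D" and sum: "Left.comb t N \<oplus> l = \<zero>"
    using right_comb_top_part[OF f deg t_def] zero by auto
  have t: "coeffs t N"
    unfolding coeffs_def t_def using f sigma_mon_closed R_zero by auto
  obtain g M where g: "coeffs g M" "\<forall>q. \<not> tdeg q < D \<longrightarrow> g q = \<zero>" "l = Left.comb g M"
    using Left.span_imp_comb[OF l] by blast
  have "Left.comb (\<lambda>q. t q \<oplus> g q) (max N M) = \<zero>"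
    using Left.comb_add[OF t g(1)] sum g(3) by simp
  then have "t p \<oplus> g p = \<zero>"
    by (rule left_comb_eq_zero[OF coeffs_add[OF t g(1)]])
  then have "sigma_mon p (f p) = \<zero>"
    using g(2) p f sigma_mon_closed by (simp add: t_def)
  then show False
    using p(2) sigma_mon_eq_zero_iff f by blast
qed

lemma right_basis: "right_free_basis A R (mon A x1 x2)"
  unfolding right_free_basis_def using right_span right_comb_eq_zero by blast

end

section \<open>Graded rings\<close>

locale graded_ring = ring_subring +
  fixes K :: "'a set" and Rg :: "nat \<Rightarrow> 'a set"
  assumes graded: "graded_alg A K R Rg" and subfield_K: "subfield K A"
begin

lemma Rg_subspace:
  "\<forall>m. Rg m \<subseteq> R \<and> \<zero> \<in> Rg m \<and> (\<forall>a\<in>Rg m. \<forall>b\<in>Rg m. a \<oplus> b \<in> Rg m) \<and> (\<forall>k\<in>K. \<forall>a\<in>Rg m. k \<otimes> a \<in> Rg m)"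
  using graded unfolding graded_alg_def by (elim conjE) assumption

lemma Rg_subset: "Rg m \<subseteq> R"
  and Rg_zero: "\<zero> \<in> Rg m"
  and Rg_add: "a \<in> Rg m \<Longrightarrow> b \<in> Rg m \<Longrightarrow> a \<oplus> b \<in> Rg m"
  and Rg_smult: "k \<in> K \<Longrightarrow> a \<in> Rg m \<Longrightarrow> k \<otimes> a \<in> Rg m"
  using Rg_subspace by simp_all

lemma Rg_decomp: "r \<in> R \<Longrightarrow> \<exists>N f. (\<forall>m. f m \<in> Rg m) \<and> r = finsum A f {..<N}"
proof -
  have "\<forall>r\<in>R. \<exists>N f. (\<forall>m. f m \<in> Rg m) \<and> r = finsum A f {..<N}"
    using graded unfolding graded_alg_def by (elim conjE) assumption
  then show "r \<in> R \<Longrightarrow> ?thesis" by (rule bspec)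
qed

lemma Rg_decomp_unique: "\<forall>n. f n \<in> Rg n \<Longrightarrow> finsum A f {..<N} = \<zero> \<Longrightarrow> m < N \<Longrightarrow> f m = \<zero>"
proof -
  have "\<forall>N f. (\<forall>m. f m \<in> Rg m) \<and> finsum A f {..<N} = \<zero> \<longrightarrow> (\<forall>m<N. f m = \<zero>)"
    using graded unfolding graded_alg_def by (elim conjE) assumption
  then show "\<forall>n. f n \<in> Rg n \<Longrightarrow> finsum A f {..<N} = \<zero> \<Longrightarrow> m < N \<Longrightarrow> f m = \<zero>" by blast
qed

lemma Rg_carrier: "a \<in> Rg m \<Longrightarrow> a \<in> carrier A"
  using Rg_subset R_carrier by blast

lemma K_carrier: "k \<in> K \<Longrightarrow> k \<in> carrier A"
  using subfieldE(3)[OF subfield_K] by blast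

lemma K_zero: "\<zero> \<in> K" and K_one: "\<one> \<in> K" and K_neg: "k \<in> K \<Longrightarrow> \<ominus> k \<in> K"
  using subringE(2,3,5)[OF subfieldE(1)[OF subfield_K]] by auto

lemma Rg_neg: "a \<in> Rg m \<Longrightarrow> \<ominus> a \<in> Rg m"
  using Rg_smult[OF K_neg[OF K_one]] Rg_carrier by (simp add: l_minus)

lemma Rg_0_subset_K:
  assumes "connected_graded A K Rg x1 x2"
  shows "Rg 0 \<subseteq> K"
proof
  fix r assume r: "r \<in> Rg 0"
  have "r = \<one> \<otimes> (r \<otimes> mon A x1 x2 (0, 0))"
    using Rg_carrier[OF r] by (simp add: mon_def)
  moreover have "r \<otimes> mon A x1 x2 (0, 0) \<in> {r \<otimes> mon A x1 x2 (a, b) | r t a b. r \<in> Rg t \<and> t + a + b = 0}"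
    using r by blast
  ultimately have "r \<in> Agr A K Rg x1 x2 0"
    unfolding Agr_def kspan_def using K_one by (intro addcl.incl) blast
  then show "r \<in> K"
    using assms unfolding connected_graded_def by simp
qed

lemma Rg_decomp_padded:
  assumes "r \<in> R"
  shows "\<exists>N g. M \<le> N \<and> (\<forall>n. g n \<in> Rg n) \<and> r = finsum A g {..<N}"
proof -
  obtain N0 f where f: "\<forall>n. f n \<in> Rg n" and r: "r = finsum A f {..<N0}"
    using Rg_decomp[OF assms] by blast
  define g where "g n = (if n < N0 then f n else \<zero>)" for n
  have g: "\<forall>n. g n \<in> Rg n" using f Rg_zero by (simp add: g_def)
  have f_closed: "f n \<in> carrier A" for n using f Rg_carrier by blast
  have "r = finsum A g {..<N0}"
    unfolding r g_def using f Rg_carrier by (intro finsum_cong) (auto simp: Pi_def)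
  also have "\<dots> = finsum A g {..<max N0 M}"
    using f_closed by (intro add.finprod_mono_neutral_cong_left) (auto simp: g_def)
  finally show ?thesis using g by (intro exI[of _ "max N0 M"] exI[of _ g]) simp
qed

lemma homogeneous_sum_components_zero:
  assumes g: "\<forall>n. g n \<in> Rg n" and hom: "finsum A g {..<N} \<in> Rg m" and "m < N"
    and "n < N" and "n \<noteq> m"
  shows "g n = \<zero>"
proof -
  let ?r = "finsum A g {..<N}"
  define u where "u k = g k \<oplus> (if k = m then \<ominus> ?r else \<zero>)" for k
  have u: "\<forall>k. u k \<in> Rg k"
    unfolding u_def using g Rg_add Rg_neg[OF hom] Rg_zero by auto
  have g_closed: "g \<in> {..<N} \<rightarrow> carrier A" using g Rg_carrier by blast
  have r_closed: "?r \<in> carrier A" using Rg_carrier[OF hom] .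
  have "finsum A u {..<N} = ?r \<oplus> finsum A (\<lambda>k. if k = m then \<ominus> ?r else \<zero>) {..<N}"
    unfolding u_def using g_closed r_closed by (intro finsum_addf) auto
  also have "finsum A (\<lambda>k. if k = m then \<ominus> ?r else \<zero>) {..<N} = \<ominus> ?r"
    using add.finprod_singleton_swap[of m "{..<N}" "\<lambda>_. \<ominus> ?r"] \<open>m < N\<close> r_closed by simp
  finally have "finsum A u {..<N} = \<zero>" using r_closed by (simp add: r_neg)
  then have "u n = \<zero>" using Rg_decomp_unique[OF u] \<open>n < N\<close> by blast
  then show ?thesis using \<open>n \<noteq> m\<close> g Rg_carrier[of "g n" n] unfolding u_def by simp
qed

lemma finsum_additive:
  assumes add: "\<And>a b. a \<in> R \<Longrightarrow> b \<in> R \<Longrightarrow> s (a \<oplus> b) = s a \<oplus> s b" and zero: "s \<zero> = \<zero>"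
    and closed: "\<And>a. a \<in> R \<Longrightarrow> s a \<in> R" and g: "\<And>n. g n \<in> R"
  shows "s (finsum A g {..<k::nat}) = finsum A (\<lambda>n. s (g n)) {..<k}"
proof -
  have "finsum A g {..<k} \<in> R \<and> s (finsum A g {..<k}) = finsum A (\<lambda>n. s (g n)) {..<k}"
  proof (induction k)
    case 0
    then show ?case using zero R_zero by simp
  next
    case (Suc k)
    have "finsum A g {..<Suc k} = g k \<oplus> finsum A g {..<k}"
      using g by (simp add: lessThan_Suc finsum_insert Pi_def)
    moreover have "finsum A (\<lambda>n. s (g n)) {..<Suc k} = s (g k) \<oplus> finsum A (\<lambda>n. s (g n)) {..<k}"
      using g closed by (simp add: lessThan_Suc finsum_insert Pi_def)
    ultimately show ?case using Suc.IH add[OF g] R_add[OF g] by simp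
  qed
  then show ?thesis ..
qed

lemma homogeneous_preimage:
  assumes add: "\<And>a b. a \<in> R \<Longrightarrow> b \<in> R \<Longrightarrow> s (a \<oplus> b) = s a \<oplus> s b" and zero: "s \<zero> = \<zero>"
    and bij: "bij_betw s R R" and graded_s: "\<And>n a. a \<in> Rg n \<Longrightarrow> s a \<in> Rg n"
    and r: "r \<in> Rg m"
  shows "\<exists>v\<in>Rg m. s v = r"
proof -
  have closed: "\<And>a. a \<in> R \<Longrightarrow> s a \<in> R" using bij unfolding bij_betw_def by blast
  have "r \<in> s ` R" using bij r Rg_subset unfolding bij_betw_def by blast
  then obtain v where v: "v \<in> R" "s v = r" by (metis imageE)
  obtain N g where N: "Suc m \<le> N" and g: "\<forall>n. g n \<in> Rg n" and v_sum: "v = finsum A g {..<N}"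
    using Rg_decomp_padded[OF v(1)] by blast
  have gR: "g n \<in> R" for n using g Rg_subset by blast
  then have g_closed: "g n \<in> carrier A" for n by simp
  have sg: "\<forall>n. s (g n) \<in> Rg n" using g graded_s by blast
  have "finsum A (\<lambda>n. s (g n)) {..<N} = r"
    using finsum_additive[OF add zero closed gR] v v_sum by simp
  then have sum_hom: "finsum A (\<lambda>n. s (g n)) {..<N} \<in> Rg m" using r by simp
  have g_zero: "g n = \<zero>" if "n < N" "n \<noteq> m" for n
  proof (rule inj_onD[OF bij_betw_imp_inj_on[OF bij]])
    have "s (g n) = \<zero>"
      by (rule homogeneous_sum_components_zero[OF sg sum_hom _ that]) (use N in simp)
    then show "s (g n) = s \<zero>" by (simp add: zero)
  qed (simp_all add: gR R_zero)
  have "v = finsum A (\<lambda>n. if n = m then g n else \<zero>) {..<N}"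
    unfolding v_sum by (rule finsum_cong') (auto simp: g_zero g_closed)
  also have "\<dots> = g m"
    using N by (intro add.finprod_singleton_swap) (auto simp: g_closed)
  finally show ?thesis using v(2) g by blast
qed

end

section \<open>Graded double Ore extensions\<close>

lemma (in ring_subring) eq_add_if_minus_in_lcomb:
  assumes "a \<in> carrier A" and "b \<in> carrier A" and "a \<ominus> b \<in> lcomb A S0 S1 S2 y1 y2"
  shows "\<exists>r0\<in>S0. \<exists>r1\<in>S1. \<exists>r2\<in>S2. a = b \<oplus> (r0 \<oplus> r1 \<otimes> y1 \<oplus> r2 \<otimes> y2)"
  using assms(3) minus_eq_imp_eq_add[OF assms(1,2)] unfolding lcomb_def by blast

context two_var_PBW
begin

lemma x1_mult_in_lcomb:
  assumes "r \<in> R" and "\<delta>1 r \<in> S0" and "\<sigma>1 r \<in> S1" and "\<zero> \<in> S2"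
  shows "x1 \<otimes> r \<in> lcomb A S0 S1 S2 x1 x2"
proof -
  have "x1 \<otimes> r = \<delta>1 r \<oplus> \<sigma>1 r \<otimes> x1 \<oplus> \<zero> \<otimes> x2"
    using X1.x_mult[OF assms(1)] assms(1) by (simp add: X1.sigma_closed X1.delta_closed a_comm)
  then show ?thesis unfolding lcomb_def using assms(2-4) by blast
qed

lemma x2_mult_in_lcomb:
  assumes "r \<in> R" and "\<delta>2 r \<in> S0" and "\<zero> \<in> S1" and "\<sigma>2 r \<in> S2"
  shows "x2 \<otimes> r \<in> lcomb A S0 S1 S2 x1 x2"
proof -
  have "x2 \<otimes> r = \<delta>2 r \<oplus> \<zero> \<otimes> x1 \<oplus> \<sigma>2 r \<otimes> x2"
    using X2.x_mult[OF assms(1)] assms(1) by (simp add: X2.sigma_closed X2.delta_closed a_comm)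
  then show ?thesis unfolding lcomb_def using assms(2-4) by blast
qed

lemma mult_R_in_lcomb: "\<forall>xi\<in>{x1, x2}. \<forall>r\<in>R. xi \<otimes> r \<in> lcomb A R R R x1 x2"
  using x1_mult_in_lcomb x2_mult_in_lcomb R_zero
    X1.sigma_closed X1.delta_closed X2.sigma_closed X2.delta_closed by simp

end

locale graded_two_var_PBW = two_var_PBW + graded_ring A R K Rg for K Rg +
  fixes c' u0 u1 u2 :: 'a
  assumes sigma1_graded: "r \<in> Rg m \<Longrightarrow> \<sigma>1 r \<in> Rg m \<and> \<delta>1 r \<in> Rg (Suc m)"
    and sigma2_graded: "r \<in> Rg m \<Longrightarrow> \<sigma>2 r \<in> Rg m \<and> \<delta>2 r \<in> Rg (Suc m)"
    and c_K: "c \<in> K"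
    and relation_graded: "r0 \<in> Rg 2" "r1 \<in> Rg 1" "r2 \<in> Rg 1"
    and c'_K: "c' \<in> K"
    and relation'_graded: "u0 \<in> Rg 2" "u1 \<in> Rg 1" "u2 \<in> Rg 1"
    and relation': "x1 \<otimes> x2 = c' \<otimes> x2 \<otimes> x1 \<oplus> (u0 \<oplus> u1 \<otimes> x1 \<oplus> u2 \<otimes> x2)"
begin

lemma right_relation:
  "x2 \<otimes> x1 = c \<otimes> x1 \<otimes> x2 \<oplus> \<zero> \<otimes> x1 \<otimes> x1 \<oplus> r1 \<otimes> x1 \<oplus> r2 \<otimes> x2 \<oplus> r0"
  using relation relation_coeffs by (simp add: a_ac)

lemma sigma1_homogeneous_preimage: "r \<in> Rg m \<Longrightarrow> \<exists>v\<in>Rg m. \<sigma>1 v = r"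
  by (rule homogeneous_preimage[OF X1.sigma_add X1.sigma_zero bij_sigma1]) (simp_all add: sigma1_graded)

lemma sigma2_homogeneous_preimage: "r \<in> Rg m \<Longrightarrow> \<exists>v\<in>Rg m. \<sigma>2 v = r"
  by (rule homogeneous_preimage[OF X2.sigma_add X2.sigma_zero bij_sigma2]) (simp_all add: sigma2_graded)

lemma left_relation:
  "\<exists>v1\<in>Rg 1. \<exists>v2\<in>Rg 1. \<exists>t0\<in>Rg 2.
     x1 \<otimes> x2 = c' \<otimes> x2 \<otimes> x1 \<oplus> \<zero> \<otimes> x1 \<otimes> x1 \<oplus> x1 \<otimes> v1 \<oplus> x2 \<otimes> v2 \<oplus> t0"
proof -
  obtain v1 where v1: "v1 \<in> Rg 1" "\<sigma>1 v1 = u1"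
    using sigma1_homogeneous_preimage[OF relation'_graded(2)] by blast
  obtain v2 where v2: "v2 \<in> Rg 1" "\<sigma>2 v2 = u2"
    using sigma2_homogeneous_preimage[OF relation'_graded(3)] by blast
  have v1R: "v1 \<in> R" and v2R: "v2 \<in> R" using v1 v2 Rg_subset by auto
  have d1: "\<delta>1 v1 \<in> Rg 2" and d2: "\<delta>2 v2 \<in> Rg 2"
    using sigma1_graded[OF v1(1)] sigma2_graded[OF v2(1)] by (simp_all add: numeral_2_eq_2)
  define t0 where "t0 = u0 \<oplus> \<ominus> \<delta>1 v1 \<oplus> \<ominus> \<delta>2 v2"
  have t0: "t0 \<in> Rg 2"
    unfolding t0_def using relation'_graded(1) d1 d2 by (intro Rg_add Rg_neg)
  have "u1 \<otimes> x1 = x1 \<otimes> v1 \<oplus> \<ominus> \<delta>1 v1"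
    using X1.sigma_mult_x[OF v1R one_closed] v1(2) v1R X1.delta_closed[OF v1R] by simp
  moreover have "u2 \<otimes> x2 = x2 \<otimes> v2 \<oplus> \<ominus> \<delta>2 v2"
    using X2.sigma_mult_x[OF v2R one_closed] v2(2) v2R X2.delta_closed[OF v2R] by simp
  ultimately have "x1 \<otimes> x2 = c' \<otimes> x2 \<otimes> x1 \<oplus> \<zero> \<otimes> x1 \<otimes> x1 \<oplus> x1 \<otimes> v1 \<oplus> x2 \<otimes> v2 \<oplus> t0"
    unfolding relation' t0_def
    using K_carrier[OF c'_K] Rg_carrier[OF relation'_graded(1)] v1R v2R
      Rg_carrier[OF d1] Rg_carrier[OF d2]
    by (simp add: a_ac)
  then show ?thesis using v1(1) v2(1) t0 by blast
qed

lemma mult_Rg_in_lcomb: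
  "\<forall>xi\<in>{x1, x2}. \<forall>m. \<forall>r\<in>Rg m. xi \<otimes> r \<in> lcomb A (Rg (Suc m)) (Rg m) (Rg m) x1 x2"
proof (intro ballI allI)
  fix xi m r assume xi: "xi \<in> {x1, x2}" and r: "r \<in> Rg m"
  have rR: "r \<in> R" using r Rg_subset by blast
  have "x1 \<otimes> r \<in> lcomb A (Rg (Suc m)) (Rg m) (Rg m) x1 x2"
    using sigma1_graded[OF r] by (intro x1_mult_in_lcomb rR Rg_zero) simp_all
  moreover have "x2 \<otimes> r \<in> lcomb A (Rg (Suc m)) (Rg m) (Rg m) x1 x2"
    using sigma2_graded[OF r] by (intro x2_mult_in_lcomb rR Rg_zero) simp_all
  ultimately show "xi \<otimes> r \<in> lcomb A (Rg (Suc m)) (Rg m) (Rg m) x1 x2"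
    using xi by blast
qed

lemma right_double_Ore: "right_double_Ore A K R x1 x2"
  unfolding right_double_Ore_def
proof (intro conjI)
  show "\<exists>p12\<in>K. \<exists>p11\<in>K. \<exists>\<tau>0\<in>R. \<exists>\<tau>1\<in>R. \<exists>\<tau>2\<in>R. x2 \<otimes> x1 =
      p12 \<otimes> x1 \<otimes> x2 \<oplus> p11 \<otimes> x1 \<otimes> x1 \<oplus> \<tau>1 \<otimes> x1 \<oplus> \<tau>2 \<otimes> x2 \<oplus> \<tau>0"
    using right_relation c_K K_zero relation_coeffs by blast
qed (use generate_ring_eq_carrier left_basis mult_R_in_lcomb in auto)

lemma left_double_Ore: "left_double_Ore A K R x1 x2"
  unfolding left_double_Ore_def
proof (intro conjI)
  show "\<exists>p12\<in>K. \<exists>p11\<in>K. \<exists>\<tau>0\<in>R. \<exists>\<tau>1\<in>R. \<exists>\<tau>2\<in>R. x1 \<otimes> x2 =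
      p12 \<otimes> x2 \<otimes> x1 \<oplus> p11 \<otimes> x1 \<otimes> x1 \<oplus> x1 \<otimes> \<tau>1 \<oplus> x2 \<otimes> \<tau>2 \<oplus> \<tau>0"
    using left_relation c'_K K_zero Rg_subset by blast
qed (use generate_ring_eq_carrier right_basis mult_R_in_lcomb in auto)

lemma graded_double_Ore: "graded_double_Ore A K R Rg x1 x2"
  unfolding graded_double_Ore_def
proof (intro conjI)
  show "\<exists>p12\<in>K. \<exists>p11\<in>K. \<exists>\<tau>0\<in>Rg 2. \<exists>\<tau>1\<in>Rg 1. \<exists>\<tau>2\<in>Rg 1. x2 \<otimes> x1 =
      p12 \<otimes> x1 \<otimes> x2 \<oplus> p11 \<otimes> x1 \<otimes> x1 \<oplus> \<tau>1 \<otimes> x1 \<oplus> \<tau>2 \<otimes> x2 \<oplus> \<tau>0"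
    using right_relation c_K K_zero relation_graded by blast
  show "\<exists>p12\<in>K. \<exists>p11\<in>K. \<exists>\<tau>0\<in>Rg 2. \<exists>\<tau>1\<in>Rg 1. \<exists>\<tau>2\<in>Rg 1. x1 \<otimes> x2 =
      p12 \<otimes> x2 \<otimes> x1 \<oplus> p11 \<otimes> x1 \<otimes> x1 \<oplus> x1 \<otimes> \<tau>1 \<oplus> x2 \<otimes> \<tau>2 \<oplus> \<tau>0"
    using left_relation c'_K K_zero by blast
qed (use right_double_Ore left_double_Ore mult_Rg_in_lcomb in auto)

end

lemma (in graded_ring) graded_two_var_PBW_if_graded_skew_PBW:
  assumes K_central: "\<And>k a. k \<in> K \<Longrightarrow> a \<in> carrier A \<Longrightarrow> k \<otimes> a = a \<otimes> k"
    and connected: "connected_graded A K Rg x1 x2"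
    and skew: "graded_skew_PBW A K R Rg x1 x2"
  shows "\<exists>\<sigma>1 \<delta>1 \<sigma>2 \<delta>2 c r0 r1 r2 c' u0 u1 u2.
    graded_two_var_PBW A R x1 x2 \<sigma>1 \<delta>1 \<sigma>2 \<delta>2 c r0 r1 r2 K Rg c' u0 u1 u2"
proof -
  have skew_PBW: "skew_PBW A R x1 x2"
    and twist: "\<forall>xi\<in>{x1, x2}. \<exists>\<sigma> \<delta>. (\<forall>r\<in>R. \<sigma> r \<in> R \<and> \<delta> r \<in> R \<and> xi \<otimes> r = \<sigma> r \<otimes> xi \<oplus> \<delta> r) \<and>
         bij_betw \<sigma> R R \<and> (\<forall>m. \<forall>r\<in>Rg m. \<sigma> r \<in> Rg m \<and> \<delta> r \<in> Rg (Suc m))"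
    and rel: "\<forall>xi\<in>{x1, x2}. \<forall>xj\<in>{x1, x2}. \<exists>c\<in>Rg 0 - {\<zero>}.
         xj \<otimes> xi \<ominus> c \<otimes> xi \<otimes> xj \<in> lcomb A (Rg 2) (Rg 1) (Rg 1) x1 x2"
    using skew unfolding graded_skew_PBW_def by auto
  have x1: "x1 \<in> carrier A" and x2: "x2 \<in> carrier A" and basis: "left_free_basis A R (mon A x1 x2)"
    using skew_PBW unfolding skew_PBW_def by auto
  obtain \<sigma>1 \<delta>1 where \<sigma>1: "\<forall>r\<in>R. \<sigma>1 r \<in> R \<and> \<delta>1 r \<in> R \<and> x1 \<otimes> r = \<sigma>1 r \<otimes> x1 \<oplus> \<delta>1 r"
    "bij_betw \<sigma>1 R R" "\<forall>m. \<forall>r\<in>Rg m. \<sigma>1 r \<in> Rg m \<and> \<delta>1 r \<in> Rg (Suc m)"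
    using twist by blast
  obtain \<sigma>2 \<delta>2 where \<sigma>2: "\<forall>r\<in>R. \<sigma>2 r \<in> R \<and> \<delta>2 r \<in> R \<and> x2 \<otimes> r = \<sigma>2 r \<otimes> x2 \<oplus> \<delta>2 r"
    "bij_betw \<sigma>2 R R" "\<forall>m. \<forall>r\<in>Rg m. \<sigma>2 r \<in> Rg m \<and> \<delta>2 r \<in> Rg (Suc m)"
    using twist by blast
  obtain c where "c \<in> Rg 0" "x2 \<otimes> x1 \<ominus> c \<otimes> x1 \<otimes> x2 \<in> lcomb A (Rg 2) (Rg 1) (Rg 1) x1 x2"
    using rel by blast
  then obtain r0 r1 r2 where c: "c \<in> Rg 0" "r0 \<in> Rg 2" "r1 \<in> Rg 1" "r2 \<in> Rg 1"
    "x2 \<otimes> x1 = c \<otimes> x1 \<otimes> x2 \<oplus> (r0 \<oplus> r1 \<otimes> x1 \<oplus> r2 \<otimes> x2)"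
    using eq_add_if_minus_in_lcomb x1 x2 Rg_carrier by (metis m_closed)
  obtain c' where "c' \<in> Rg 0" "x1 \<otimes> x2 \<ominus> c' \<otimes> x2 \<otimes> x1 \<in> lcomb A (Rg 2) (Rg 1) (Rg 1) x1 x2"
    using rel by blast
  then obtain u0 u1 u2 where c': "c' \<in> Rg 0" "u0 \<in> Rg 2" "u1 \<in> Rg 1" "u2 \<in> Rg 1"
    "x1 \<otimes> x2 = c' \<otimes> x2 \<otimes> x1 \<oplus> (u0 \<oplus> u1 \<otimes> x1 \<oplus> u2 \<otimes> x2)"
    using eq_add_if_minus_in_lcomb x1 x2 Rg_carrier by (metis m_closed)
  have K: "c \<in> K" "c' \<in> K" using c(1) c'(1) Rg_0_subset_K[OF connected] by auto
  have "graded_two_var_PBW A R x1 x2 \<sigma>1 \<delta>1 \<sigma>2 \<delta>2 c r0 r1 r2 K Rg c' u0 u1 u2"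
  proof unfold_locales
    show "c \<in> R" "r0 \<in> R" "r1 \<in> R" "r2 \<in> R"
      using c Rg_subset by auto
  qed (use x1 x2 basis \<sigma>1 \<sigma>2 c c' K K_central K_carrier in auto)
  then show ?thesis by blast
qed

theorem theorem3p2:
  fixes A :: "'a ring" and K R :: "'a set" and Rg :: "nat \<Rightarrow> 'a set" and x1 x2 :: 'a
  assumes "K_algebra_setup A K R"
    and "graded_alg A K R Rg"
    and "graded_skew_PBW A K R Rg x1 x2"
    and "connected_graded A K Rg x1 x2"
  shows "graded_double_Ore A K R Rg x1 x2 \<and> connected_graded A K Rg x1 x2"
proof -
  have "ring A" and "subfield K A" and "subring R A"
    and K_central: "\<And>k a. k \<in> K \<Longrightarrow> a \<in> carrier A \<Longrightarrow> k \<otimes>\<^bsub>A\<^esub> a = a \<otimes>\<^bsub>A\<^esub> k"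
    using assms(1) unfolding K_algebra_setup_def by auto
  then interpret graded_ring A R K Rg
    using assms(2)
    unfolding graded_ring_def graded_ring_axioms_def ring_subring_def ring_subring_axioms_def by blast
  obtain \<sigma>1 \<delta>1 \<sigma>2 \<delta>2 c r0 r1 r2 c' u0 u1 u2 where
    "graded_two_var_PBW A R x1 x2 \<sigma>1 \<delta>1 \<sigma>2 \<delta>2 c r0 r1 r2 K Rg c' u0 u1 u2"
    using graded_two_var_PBW_if_graded_skew_PBW[OF K_central assms(4,3)] by blast
  then interpret graded_two_var_PBW A R x1 x2 \<sigma>1 \<delta>1 \<sigma>2 \<delta>2 c r0 r1 r2 K Rg c' u0 u1 u2 .
  show ?thesis using graded_double_Ore assms(4) by blast
qed

end
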